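(* Let $M\subset\mathbb{R}^d$ be a compact, geodesically convex set with $r_0:=\mathrm{reach}(M)>0$. For each $n$ let $\mathcal{X}_n=\{X_1,\dots,X_n\}\subset M$ be a finite set, and let $\{\varepsilon_n\}_n$ be a sequence of strictly positive real numbers with $\varepsilon_n\to 0$ and $\tau_n:=d_H(\mathcal{X}_n,M)/\varepsilon_n\to 0$. Let $n$ be large enough that $\varepsilon_n<2r_0$. Then for all $x,y\in M$, $$\Big(1-\frac{1}{24}\Big(\frac{\pi\varepsilon_n}{2r_0}\Big)^2\Big)\,d_M(x,y)\;\le\; d_{G_n}(x,y)\;\le\;(1+4\tau_n)\,d_M(x,y),$$ where $d_{G_n}(x,y)$ denotes the graph distance between $x$ and $y$ in the graph $G_n$ built on the vertex set $\mathcal{X}_n\cup\{x,y\}$.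
   Context: $\|\cdot\|$ is the Euclidean norm. For $A\subset\mathbb{R}^d$, $d(x,A)=\inf_{a\in A}\|x-a\|$; for nonempty compact $A,C$, the Hausdorff distance is $d_H(A,C)=\max\{\max_{a\in A}d(a,C),\max_{c\in C}d(c,A)\}$. $\mathrm{Unp}(M)$ is the set of points of $\mathbb{R}^d$ having a unique closest point in $M$; for $x\in M$, $\mathrm{reach}(M,x)=\sup\{r>0:\mathring{\mathcal{B}}(x,r)\subset\mathrm{Unp}(M)\}$ (open ball), and $\mathrm{reach}(M)=\inf_{x\in M}\mathrm{reach}(M,x)$. The length of a continuous curve $\gamma:[0,T]\to M$ is $l(\gamma)=\sup_P\sum_i\|\gamma(t_{i+1})-\gamma(t_i)\|$ over finite partitions of $[0,T]$; the geodesic distance is $d_M(x,y)=\inf_\gamma l(\gamma)$ over continuous curves in $M$ joining $x,y$; $M$ is geodesically convex if any two points are joined by a curve in $M$ of length $d_M(x,y)$. Given a finite vertex set $V$ and $\varepsilon_n>0$, the graph $G_n$ on $V$ has an edge between $u,v$ iff $\|u-v\|\le\varepsilon_n$, and $d_{G_n}(u,v)=\min_P\sum_{i=1}^{p-1}\|v_{i+1}-v_i\|$ over all paths $P=(v_1,\dots,v_p)$ along edges of $G_n$ with $v_1=u$, $v_p=v$. *)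

theory Defs
  imports "HOL-Analysis.Analysis"
begin

definition hausdorff_dist :: "'a::metric_space set \<Rightarrow> 'a set \<Rightarrow> real" where
  "hausdorff_dist A C = max (SUP a\<in>A. infdist a C) (SUP c\<in>C. infdist c A)"

definition Unp :: "'a::metric_space set \<Rightarrow> 'a set" where
  "Unp M = {x. \<exists>!a. a \<in> M \<and> (\<forall>b\<in>M. dist x a \<le> dist x b)}"

definition reach_at :: "'a::metric_space set \<Rightarrow> 'a \<Rightarrow> ereal" where
  "reach_at M x = (SUP r\<in>{r::real. r > 0 \<and> ball x r \<subseteq> Unp M}. ereal r)"

definition reach :: "'a::metric_space set \<Rightarrow> ereal" where
  "reach M = (INF x\<in>M. reach_at M x)"

definition curve_length :: "(real \<Rightarrow> 'a::real_normed_vector) \<Rightarrow> real \<Rightarrow> ereal" where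
  "curve_length \<gamma> T =
     (SUP ts\<in>{ts. sorted ts \<and> set ts \<subseteq> {0..T}}.
        ereal (\<Sum>i<length ts - 1. norm (\<gamma> (ts ! Suc i) - \<gamma> (ts ! i))))"

definition curve_in :: "'a::real_normed_vector set \<Rightarrow> 'a \<Rightarrow> 'a \<Rightarrow> (real \<Rightarrow> 'a) \<Rightarrow> real \<Rightarrow> bool" where
  "curve_in M x y \<gamma> T \<longleftrightarrow> 0 \<le> T \<and> continuous_on {0..T} \<gamma> \<and> \<gamma> ` {0..T} \<subseteq> M
      \<and> \<gamma> 0 = x \<and> \<gamma> T = y"

definition geodesic_dist :: "'a::real_normed_vector set \<Rightarrow> 'a \<Rightarrow> 'a \<Rightarrow> ereal" where
  "geodesic_dist M x y = (INF (\<gamma>, T)\<in>{(\<gamma>, T). curve_in M x y \<gamma> T}. curve_length \<gamma> T)"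

definition geodesically_convex :: "'a::real_normed_vector set \<Rightarrow> bool" where
  "geodesically_convex M \<longleftrightarrow>
     (\<forall>x\<in>M. \<forall>y\<in>M. \<exists>\<gamma> T. curve_in M x y \<gamma> T \<and> curve_length \<gamma> T = geodesic_dist M x y)"

text \<open>Weighted shortest-path distance in the eps-neighbourhood graph on V
  (infinite if u, v are not connected).\<close>
definition graph_path :: "'a::real_normed_vector set \<Rightarrow> real \<Rightarrow> 'a \<Rightarrow> 'a \<Rightarrow> 'a list \<Rightarrow> bool" where
  "graph_path V eps u v P \<longleftrightarrow> P \<noteq> [] \<and> hd P = u \<and> last P = v \<and> set P \<subseteq> V
      \<and> (\<forall>i < length P - 1. norm (P ! Suc i - P ! i) \<le> eps)"

definition graph_dist :: "'a::real_normed_vector set \<Rightarrow> real \<Rightarrow> 'a \<Rightarrow> 'a \<Rightarrow> ereal" where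
  "graph_dist V eps u v =
     (INF P\<in>{P. graph_path V eps u v P}. ereal (\<Sum>i<length P - 1. norm (P ! Suc i - P ! i)))"

end

theory Submission
  imports Defs
begin

text \<open>Upper bound: a shortest curve from \<open>x\<close> to \<open>y\<close> is replaced by a fine inscribed polygon,
  which is followed greedily through sample points. Each hop costs at most \<open>2 \<delta>\<close> more than the
  piece of polygon it replaces, \<open>\<delta>\<close> being the Hausdorff distance, and that piece is longer than
  \<open>\<epsilon>/2\<close>, whence the factor \<open>1 + 4 \<delta> / \<epsilon>\<close>.

  Lower bound: reach \<open>r\<close> makes the nearest-point map onto \<open>M\<close> single-valued and Lipschitz near
  \<open>M\<close>, so a chord of length \<open>t\<close> projects to a curve in \<open>M\<close> of length at most
  \<open>r t / (r - t/2)\<close>. Splitting a chord at the projection of its midpoint does not increase the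
  total arc angle \<open>\<Sum> arcsin (t\<^sub>i / 2r)\<close>, and iterating gives
  \<open>d\<^sub>M(u, v) \<le> 2 r arcsin (\<parallel>u - v\<parallel> / 2r)\<close>. Summed along a path of \<open>G\<^sub>n\<close>, the inequality
  \<open>sin \<phi> \<ge> \<phi> - \<phi>\<^sup>3/6\<close> together with Jordan's inequality turns this into the factor
  \<open>1 - (\<pi> \<epsilon> / 4r)\<^sup>2 / 6\<close>. Infinite reach is the limit \<open>r \<rightarrow> \<infinity>\<close>.\<close>

section \<open>Trigonometric inequalities\<close>

lemma cos_ge_one_minus_square_half:
  fixes x :: real assumes "0 \<le> x" shows "1 - x^2 / 2 \<le> cos x"
proof -
  have "(\<lambda>t. cos t - 1 + t^2 / 2) 0 \<le> (\<lambda>t. cos t - 1 + t^2 / 2) x"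
  proof (rule DERIV_nonneg_imp_nondecreasing[OF assms])
    fix t :: real assume "0 \<le> t" "t \<le> x"
    show "\<exists>y. ((\<lambda>t. cos t - 1 + t^2 / 2) has_real_derivative y) (at t) \<and> 0 \<le> y"
      by (intro exI[of _ "t - sin t"] conjI)
         (auto intro!: derivative_eq_intros simp: sin_x_le_x \<open>0 \<le> t\<close>)
  qed
  then show ?thesis by simp
qed

lemma sin_ge_cubic:
  fixes x :: real assumes "0 \<le> x" shows "x - x^3 / 6 \<le> sin x"
proof -
  have "(\<lambda>t. sin t - t + t^3 / 6) 0 \<le> (\<lambda>t. sin t - t + t^3 / 6) x"
  proof (rule DERIV_nonneg_imp_nondecreasing[OF assms])
    fix t :: real assume "0 \<le> t" "t \<le> x"
    then show "\<exists>y. ((\<lambda>t. sin t - t + t^3 / 6) has_real_derivative y) (at t) \<and> 0 \<le> y"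
      using cos_ge_one_minus_square_half[of t]
      by (intro exI[of _ "cos t - 1 + t^2 / 2"] conjI) (auto intro!: derivative_eq_intros)
  qed
  then show ?thesis by simp
qed

lemma mult_cos_le_sin:
  fixes x :: real assumes "0 \<le> x" "x \<le> pi" shows "x * cos x \<le> sin x"
proof -
  have "(\<lambda>t. sin t - t * cos t) 0 \<le> (\<lambda>t. sin t - t * cos t) x"
  proof (rule DERIV_nonneg_imp_nondecreasing[OF assms(1)])
    fix t :: real assume "0 \<le> t" "t \<le> x"
    then have "0 \<le> t * sin t" using assms by (simp add: sin_ge_zero)
    then show "\<exists>y. ((\<lambda>t. sin t - t * cos t) has_real_derivative y) (at t) \<and> 0 \<le> y"
      by (intro exI[of _ "t * sin t"] conjI) (auto intro!: derivative_eq_intros)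
  qed
  then show ?thesis by simp
qed

lemma jordan_inequality:
  fixes x :: real assumes "0 \<le> x" "x \<le> pi / 2" shows "2 * x / pi \<le> sin x"
proof (cases "x = 0")
  case False
  then have "0 < x" using assms by simp
  have "(\<lambda>t. sin t / t) (pi / 2) \<le> (\<lambda>t. sin t / t) x"
  proof (rule DERIV_nonpos_imp_nonincreasing[OF assms(2)])
    fix t :: real assume t: "x \<le> t" "t \<le> pi / 2"
    with \<open>0 < x\<close> have "0 < t" "t * cos t \<le> sin t" by (auto intro: mult_cos_le_sin)
    then show "\<exists>y. ((\<lambda>t. sin t / t) has_real_derivative y) (at t) \<and> y \<le> 0"
      by (intro exI[of _ "(cos t * t - sin t) / t^2"] conjI)
         (auto intro!: derivative_eq_intros divide_nonpos_nonneg simp: power2_eq_square mult.commute)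
  qed
  then show ?thesis using \<open>0 < x\<close> by (simp add: field_simps)
qed simp

lemma chord_le_arc:
  fixes c r :: real assumes "0 < r" "0 \<le> c" "c \<le> 2 * r"
  shows "c \<le> 2 * r * arcsin (c / (2 * r))"
proof -
  have "0 \<le> c / (2 * r)" "c / (2 * r) \<le> 1" using assms by auto
  then have "c / (2 * r) \<le> arcsin (c / (2 * r))"
    using sin_x_le_x[of "arcsin (c / (2 * r))"] arcsin_le_arcsin[of 0 "c / (2 * r)"] by simp
  then show ?thesis using assms by (simp add: field_simps)
qed

definition arc_chord_factor :: "real \<Rightarrow> real \<Rightarrow> real" where
  "arc_chord_factor e r = 1 - (1/24) * (pi * e / 2)^2 * (1/r)^2"

lemma arc_chord_factor_pos:
  assumes "0 < r" "0 \<le> e" "e < 2 * r" shows "0 < arc_chord_factor e r"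
proof -
  have "pi * (e / (2 * r)) < pi * 1" using assms by (intro mult_strict_left_mono) auto
  then have "(pi * (e / (2 * r)))^2 < 4^2"
    using assms pi_less_4 by (intro power_strict_mono) auto
  then show ?thesis by (simp add: arc_chord_factor_def power_mult_distrib power_divide)
qed

text \<open>With \<open>\<phi> = arcsin (c / (2 r))\<close>, Jordan's inequality gives \<open>\<phi> \<le> \<pi> e / (4 r)\<close>, so the
  factor is at most \<open>1 - \<phi>\<^sup>2 / 6\<close>, and \<open>\<phi> (1 - \<phi>\<^sup>2 / 6) \<le> sin \<phi>\<close>.\<close>

lemma arc_chord_factor_mult_arc_le:
  fixes r c e :: real
  assumes "0 < r" "0 \<le> c" "c \<le> e" "e < 2 * r"
  shows "arc_chord_factor e r * (2 * r * arcsin (c / (2 * r))) \<le> c"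
proof -
  define x where "x = c / (2 * r)"
  define \<phi> where "\<phi> = arcsin x"
  have x: "0 \<le> x" "x \<le> e / (2 * r)" "x \<le> 1" using assms by (auto simp: x_def divide_right_mono)
  have sin_phi: "sin \<phi> = x" using x by (simp add: \<phi>_def)
  have phi: "0 \<le> \<phi>" "\<phi> \<le> pi / 2"
    using x arcsin_bounded[of x] arcsin_le_arcsin[of 0 x] by (auto simp: \<phi>_def)
  have "(2 * \<phi> / pi)^2 \<le> (e / (2 * r))^2"
    using jordan_inequality[OF phi] sin_phi x phi by (intro power_mono) auto
  then have "\<phi>^2 / 6 \<le> (1/24) * (pi * e / 2)^2 * (1/r)^2"
    by (simp add: field_simps power2_eq_square)
  then have "arc_chord_factor e r * \<phi> \<le> (1 - \<phi>^2 / 6) * \<phi>"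
    using phi by (intro mult_right_mono) (auto simp: arc_chord_factor_def)
  also have "\<dots> = \<phi> - \<phi>^3 / 6" by (simp add: algebra_simps power2_eq_square power3_eq_cube)
  also have "\<dots> \<le> x" using sin_ge_cubic[OF phi(1)] sin_phi by simp
  finally have "2 * r * (arc_chord_factor e r * \<phi>) \<le> 2 * r * x"
    using assms by (intro mult_left_mono) auto
  then show ?thesis using assms by (simp add: x_def \<phi>_def algebra_simps)
qed

lemma sagitta_le:
  fixes r t :: real assumes "0 < r" "0 \<le> t" "t \<le> 2 * r"
  shows "r - sqrt (r^2 - t^2 / 4) \<le> t^2 / (4 * r)"
proof -
  define c where "c = sqrt (r^2 - t^2 / 4)"
  have "t^2 \<le> (2 * r)^2" using assms by (intro power_mono) auto
  then have c2: "c^2 = r^2 - t^2 / 4" and "0 \<le> c" by (simp_all add: c_def power_mult_distrib)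
  have "c \<le> r" using assms real_sqrt_le_mono[of "r^2 - t^2 / 4" "r^2"] by (simp add: c_def)
  with \<open>0 \<le> c\<close> have "(r - c) * r \<le> (r - c) * (r + c)" by (intro mult_left_mono) auto
  also have "\<dots> = t^2 / 4" using c2 by (simp add: algebra_simps power2_eq_square)
  finally show ?thesis using assms by (simp add: c_def field_simps)
qed

lemma angle_add_le_of_sin_squares_le:
  fixes a b \<theta> :: real
  assumes "0 \<le> a" "a \<le> pi / 2" "0 \<le> b" "b \<le> pi / 2" "0 \<le> \<theta>" "\<theta> < pi / 2"
    and "(sin a)^2 + (sin b)^2 \<le> 1 - cos \<theta>"
  shows "a + b \<le> \<theta>"
proof -
  have "cos (a + b) * cos (a - b) = (cos a)^2 * (cos b)^2 - (sin a)^2 * (sin b)^2"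
    by (simp add: cos_add cos_diff algebra_simps power2_eq_square)
  also have "\<dots> = 1 - (sin a)^2 - (sin b)^2" by (simp add: cos_squared_eq algebra_simps)
  finally have "cos \<theta> \<le> cos (a + b) * cos (a - b)" using assms(7) by linarith
  moreover have "0 < cos \<theta>" using assms by (intro cos_gt_zero_pi) auto
  moreover have "0 \<le> cos (a - b)" "cos (a - b) \<le> 1" using assms by (auto intro!: cos_ge_zero)
  ultimately have "0 < cos (a + b)"
    using mult_nonpos_nonneg[of "cos (a + b)" "cos (a - b)"] by force
  then have "cos (a + b) * cos (a - b) \<le> cos (a + b)"
    using \<open>cos (a - b) \<le> 1\<close> by (simp add: mult_left_le)
  with \<open>cos \<theta> \<le> _\<close> have "cos \<theta> \<le> cos (a + b)" by linarith
  then show ?thesis using assms by (subst (asm) cos_mono_le_eq) auto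
qed

lemma arcsin_add_arcsin_le:
  fixes a b t r :: real
  assumes "0 < r" "0 \<le> a" "0 \<le> b" "0 \<le> t" "t < 2 * r"
    and sq: "a^2 + b^2 \<le> 4 * r * (r - sqrt (r^2 - t^2 / 4))"
  shows "arcsin (a / (2 * r)) + arcsin (b / (2 * r)) \<le> arcsin (t / (2 * r))"
proof -
  define c where "c = sqrt (r^2 - t^2 / 4)"
  have "t^2 < (2 * r)^2" using assms by (intro power_strict_mono) auto
  then have c2: "c^2 = r^2 - t^2 / 4" and c0: "0 < c" by (simp_all add: c_def power_mult_distrib)
  have sq': "a^2 + b^2 \<le> (2 * r)^2 - 4 * r * c"
    using sq by (simp add: c_def algebra_simps power2_eq_square)
  have "0 \<le> 4 * r * c" using c0 assms by simp
  then have "a^2 \<le> (2 * r)^2" "b^2 \<le> (2 * r)^2" using sq' zero_le_power2[of a] zero_le_power2[of b]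
    by linarith+
  then have ab: "a \<le> 2 * r" "b \<le> 2 * r"
    using power2_le_imp_le[of a "2 * r"] power2_le_imp_le[of b "2 * r"] assms(1) by auto
  have unit: "0 \<le> a / (2 * r)" "a / (2 * r) \<le> 1" "0 \<le> b / (2 * r)" "b / (2 * r) \<le> 1"
    "0 \<le> t / (2 * r)" "t / (2 * r) < 1"
    using ab assms by auto
  have "cos (arcsin (t / (2 * r))) = sqrt (1 - (t / (2 * r))^2)"
    using unit by (intro cos_arcsin) auto
  also have "1 - (t / (2 * r))^2 = (r^2 - t^2 / 4) / r^2" using assms by (simp add: field_simps)
  also have "\<dots> = (c / r)^2" by (simp add: power_divide c2)
  also have "sqrt ((c / r)^2) = c / r" using c0 assms by simp
  finally have cos_theta: "cos (arcsin (t / (2 * r))) = c / r" .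
  have "sin (arcsin (a / (2 * r))) = a / (2 * r)" "sin (arcsin (b / (2 * r))) = b / (2 * r)"
    using unit by (intro sin_arcsin; simp)+
  then have "(sin (arcsin (a / (2 * r))))^2 + (sin (arcsin (b / (2 * r))))^2 = (a^2 + b^2) / (2 * r)^2"
    by (simp add: power_divide add_divide_distrib)
  also have "\<dots> \<le> ((2 * r)^2 - 4 * r * c) / (2 * r)^2" using sq' by (simp add: divide_right_mono)
  also have "\<dots> = 1 - c / r" using assms by (simp add: field_simps power2_eq_square)
  finally have "(sin (arcsin (a / (2 * r))))^2 + (sin (arcsin (b / (2 * r))))^2
      \<le> 1 - cos (arcsin (t / (2 * r)))"
    unfolding cos_theta .
  moreover have "0 \<le> arcsin (a / (2 * r))" "arcsin (a / (2 * r)) \<le> pi / 2"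
    "0 \<le> arcsin (b / (2 * r))" "arcsin (b / (2 * r)) \<le> pi / 2"
    "0 \<le> arcsin (t / (2 * r))" "arcsin (t / (2 * r)) < pi / 2"
    using unit arcsin_nonneg[of "a / (2 * r)"] arcsin_nonneg[of "b / (2 * r)"]
      arcsin_nonneg[of "t / (2 * r)"] arcsin_ubound[of "a / (2 * r)"] arcsin_ubound[of "b / (2 * r)"]
      arcsin_lt_bounded[of "t / (2 * r)"]
    by auto
  ultimately show ?thesis by (rule angle_add_le_of_sin_squares_le[rotated 6])
qed

section \<open>Chains, curve length and geodesic distance\<close>

lemma successively_conv_nth:
  "successively P xs \<longleftrightarrow> (\<forall>i < length xs - 1. P (xs ! i) (xs ! Suc i))"
proof (induction P xs rule: successively.induct)
  case (3 P x y xs)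
  then show ?case by (auto simp: less_Suc_eq_0_disj)
qed auto

lemma successively_append_tl:
  assumes "xs \<noteq> []" "ys \<noteq> []" "last xs = hd ys"
  shows "successively P (xs @ tl ys) \<longleftrightarrow> successively P xs \<and> successively P ys"
  using assms by (cases ys) (auto simp: successively_append_iff successively_Cons)

abbreviation eps_chain :: "real \<Rightarrow> 'a::real_normed_vector list \<Rightarrow> bool" where
  "eps_chain e \<equiv> successively (\<lambda>x y. norm (y - x) \<le> e)"

fun chain_sum :: "(real \<Rightarrow> real) \<Rightarrow> 'a::real_normed_vector list \<Rightarrow> real" where
  "chain_sum f (x # y # xs) = f (norm (y - x)) + chain_sum f (y # xs)"
| "chain_sum f _ = 0"

abbreviation chain_length :: "'a::real_normed_vector list \<Rightarrow> real" where
  "chain_length \<equiv> chain_sum (\<lambda>s. s)"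

lemma chain_sum_conv_sum:
  "chain_sum f xs = (\<Sum>i < length xs - 1. f (norm (xs ! Suc i - xs ! i)))"
proof (induction f xs rule: chain_sum.induct)
  case (1 f x y xs)
  then show ?case by (simp add: sum.lessThan_Suc_shift del: sum.lessThan_Suc)
qed auto

lemma chain_sum_Cons: "xs \<noteq> [] \<Longrightarrow> chain_sum f (x # xs) = f (norm (hd xs - x)) + chain_sum f xs"
  by (cases xs) auto

lemma chain_sum_snoc:
  "xs \<noteq> [] \<Longrightarrow> chain_sum f (xs @ [y]) = chain_sum f xs + f (norm (y - last xs))"
  by (induction f xs rule: chain_sum.induct) auto

lemma chain_sum_append_tl:
  "xs \<noteq> [] \<Longrightarrow> ys \<noteq> [] \<Longrightarrow> last xs = hd ys \<Longrightarrow>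
    chain_sum f (xs @ tl ys) = chain_sum f xs + chain_sum f ys"
proof (induction xs)
  case (Cons x xs)
  then show ?case by (cases "xs = []") (cases ys; simp add: chain_sum_Cons)+
qed simp

lemma chain_sum_append:
  assumes "xs \<noteq> []" "ys \<noteq> []"
  shows "chain_sum f (xs @ ys) = chain_sum f xs + f (norm (hd ys - last xs)) + chain_sum f ys"
proof -
  have "chain_sum f (xs @ ys) = chain_sum f ((xs @ [hd ys]) @ tl ys)" using assms by simp
  also have "\<dots> = chain_sum f (xs @ [hd ys]) + chain_sum f ys"
    using assms by (intro chain_sum_append_tl) auto
  finally show ?thesis using assms by (simp add: chain_sum_snoc)
qed

lemma chain_sum_nonneg: "(\<And>s. 0 \<le> s \<Longrightarrow> 0 \<le> f s) \<Longrightarrow> 0 \<le> chain_sum f xs"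
  by (induction f xs rule: chain_sum.induct) auto

lemma chain_sum_scale: "chain_sum (\<lambda>s. c * f s) xs = c * chain_sum f xs"
  by (induction "\<lambda>s. c * f s" xs rule: chain_sum.induct) (auto simp: algebra_simps)

lemma dist_le_chain_length: "xs \<noteq> [] \<Longrightarrow> norm (last xs - hd xs) \<le> chain_length xs"
proof (induction "\<lambda>s::real. s" xs rule: chain_sum.induct)
  case (1 x y xs)
  then show ?case using norm_triangle_ineq[of "last (y # xs) - y" "y - x"] by simp
qed auto

lemma chain_length_append_le:
  "chain_length (xs @ ys) \<le> chain_length (xs @ [m]) + chain_length (m # ys)"
proof (cases "xs = [] \<or> ys = []")
  case True
  then show ?thesis
    by (cases "xs = []"; cases ys) (auto simp: chain_sum_snoc intro: chain_sum_nonneg)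
next
  case False
  then show ?thesis
    using norm_triangle_ineq[of "hd ys - m" "m - last xs"]
    by (cases ys) (auto simp: chain_sum_append chain_sum_snoc)
qed

lemma chain_length_map_le:
  assumes "\<And>s t. s \<in> set ts \<Longrightarrow> t \<in> set ts \<Longrightarrow> norm (g t - g s) \<le> L * \<bar>t - s\<bar>"
  shows "chain_length (map g ts) \<le> L * chain_length ts"
  using assms
proof (induction "\<lambda>s::real. s" ts rule: chain_sum.induct)
  case (1 s t ts)
  then have "norm (g t - g s) \<le> L * \<bar>t - s\<bar>" "chain_length (map g (t # ts)) \<le> L * chain_length (t # ts)"
    by simp_all
  then show ?case by (simp add: algebra_simps)
qed auto

lemma chain_length_sorted:
  fixes ts :: "real list"
  shows "sorted ts \<Longrightarrow> ts \<noteq> [] \<Longrightarrow> chain_length ts = last ts - hd ts"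
  by (induction "\<lambda>s::real. s" ts rule: chain_sum.induct) auto

lemma curve_length_conv_SUP:
  "curve_length g T = (SUP ts\<in>{ts. sorted ts \<and> set ts \<subseteq> {0..T}}. ereal (chain_length (map g ts)))"
  by (simp add: curve_length_def chain_sum_conv_sum)

lemma curve_length_ge:
  "sorted ts \<Longrightarrow> set ts \<subseteq> {0..T} \<Longrightarrow> ereal (chain_length (map g ts)) \<le> curve_length g T"
  unfolding curve_length_conv_SUP by (rule SUP_upper) auto

lemma curve_length_le:
  "(\<And>ts. sorted ts \<Longrightarrow> set ts \<subseteq> {0..T} \<Longrightarrow> ereal (chain_length (map g ts)) \<le> B) \<Longrightarrow>
    curve_length g T \<le> B"
  unfolding curve_length_conv_SUP by (rule SUP_least) auto

lemma curve_length_nonneg: "0 \<le> curve_length g T"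
  using curve_length_ge[of "[]" T g] by (simp add: zero_ereal_def)

lemma curve_length_const_0: "curve_length (\<lambda>_. x) 0 = 0"
proof (rule antisym[OF curve_length_le curve_length_nonneg])
  fix ts :: "real list"
  have "chain_length (map (\<lambda>_. x) ts) = 0"
    by (induction "\<lambda>s::real. s" ts rule: chain_sum.induct) auto
  then show "ereal (chain_length (map (\<lambda>_. x) ts)) \<le> 0" by simp
qed

definition curve_join :: "(real \<Rightarrow> 'a) \<Rightarrow> real \<Rightarrow> (real \<Rightarrow> 'a) \<Rightarrow> real \<Rightarrow> 'a" where
  "curve_join g1 T1 g2 t = (if t \<le> T1 then g1 t else g2 (t - T1))"

lemma sorted_dropWhile_le_gt:
  fixes c :: "'a::linorder"
  assumes "sorted ts" "t \<in> set (dropWhile (\<lambda>s. s \<le> c) ts)"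
  shows "c < t"
proof (cases "dropWhile (\<lambda>s. s \<le> c) ts")
  case (Cons b bs)
  then have "\<not> b \<le> c" using hd_dropWhile[of "\<lambda>s. s \<le> c" ts] by simp
  moreover have "sorted (b # bs)" using sorted_dropWhile[OF assms(1)] Cons by metis
  ultimately show ?thesis using assms(2) Cons by force
next
  case Nil
  with assms(2) show ?thesis by simp
qed

text \<open>A partition of \<open>[0, T1 + T2]\<close> is split at \<open>T1\<close>; inserting \<open>T1\<close> into both halves
  only increases the inscribed polygon length.\<close>

lemma curve_length_join_le:
  fixes g1 g2 :: "real \<Rightarrow> 'a::real_normed_vector"
  assumes "0 \<le> T1" "0 \<le> T2" "g1 T1 = g2 0"
  shows "curve_length (curve_join g1 T1 g2) (T1 + T2) \<le> curve_length g1 T1 + curve_length g2 T2"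
proof (rule curve_length_le)
  fix ts :: "real list" assume ts: "sorted ts" "set ts \<subseteq> {0..T1 + T2}"
  define g where "g = curve_join g1 T1 g2"
  define A where "A = takeWhile (\<lambda>t. t \<le> T1) ts"
  define B where "B = dropWhile (\<lambda>t. t \<le> T1) ts"
  have A_le: "\<forall>t\<in>set A. t \<le> T1" unfolding A_def by (auto dest: set_takeWhileD)
  have B_gt: "\<forall>t\<in>set B. T1 < t" unfolding B_def using sorted_dropWhile_le_gt[OF ts(1)] by blast
  have "ts = A @ B" by (simp add: A_def B_def)
  then have "chain_length (map g ts) = chain_length (map g A @ map g B)" by (simp flip: map_append)
  also have "\<dots> \<le> chain_length (map g A @ [g T1]) + chain_length (g T1 # map g B)"
    by (rule chain_length_append_le)
  also have "map g A @ [g T1] = map g1 (A @ [T1])" using A_le by (simp add: g_def curve_join_def)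
  also have "map g B = map (\<lambda>t. g2 (t - T1)) B"
    using B_gt by (intro map_cong) (auto simp: g_def curve_join_def)
  also have "g T1 # map (\<lambda>t. g2 (t - T1)) B = map g2 (map (\<lambda>t. t - T1) (T1 # B))"
    using assms(3) by (simp add: g_def curve_join_def)
  finally have "ereal (chain_length (map g ts))
      \<le> ereal (chain_length (map g1 (A @ [T1]))) + ereal (chain_length (map g2 (map (\<lambda>t. t - T1) (T1 # B))))"
    by simp
  also have "\<dots> \<le> curve_length g1 T1 + curve_length g2 T2"
  proof (intro add_mono curve_length_ge)
    have "sorted A" "set A \<subseteq> set ts" unfolding A_def
      using ts(1) by (auto intro: sorted_takeWhile dest: set_takeWhileD)
    then show "sorted (A @ [T1])" "set (A @ [T1]) \<subseteq> {0..T1}"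
      using ts(2) A_le assms(1) by (auto simp: sorted_append)
    have "sorted B" "set B \<subseteq> set ts" unfolding B_def
      using ts(1) by (auto intro: sorted_dropWhile dest: set_dropWhileD)
    then have "sorted (T1 # B)" "set B \<subseteq> {0..T1 + T2}" using B_gt ts(2) by (auto intro: less_imp_le)
    then show "sorted (map (\<lambda>t. t - T1) (T1 # B))" "set (map (\<lambda>t. t - T1) (T1 # B)) \<subseteq> {0..T2}"
      using B_gt assms(1,2) by (auto simp: sorted_map subset_iff)
  qed
  finally show "ereal (chain_length (map (curve_join g1 T1 g2) ts))
      \<le> curve_length g1 T1 + curve_length g2 T2" by (simp add: g_def)
qed

lemma curve_in_join:
  assumes c1: "curve_in M x y g1 T1" and c2: "curve_in M y z g2 T2"
  shows "curve_in M x z (curve_join g1 T1 g2) (T1 + T2)"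
proof -
  have T: "0 \<le> T1" "0 \<le> T2" using c1 c2 by (auto simp: curve_in_def)
  have "continuous_on {t \<in> {0..T1 + T2}. T1 \<le> t} (g2 \<circ> (\<lambda>t. t - T1))"
    using c2 by (intro continuous_on_compose continuous_intros)
      (auto simp: curve_in_def elim: continuous_on_subset)
  then have "continuous_on {0..T1 + T2} (curve_join g1 T1 g2)"
    unfolding curve_join_def using c1 c2
    by (intro continuous_on_cases_le[where h="\<lambda>t. t"] continuous_intros)
      (auto simp: curve_in_def o_def elim: continuous_on_subset)
  moreover have "curve_join g1 T1 g2 ` {0..T1 + T2} \<subseteq> M"
    using c1 c2 by (force simp: curve_in_def curve_join_def)
  ultimately show ?thesis using c1 c2 T by (auto simp: curve_in_def curve_join_def)
qed

lemma geodesic_dist_le_curve_length: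
  "curve_in M x y g T \<Longrightarrow> geodesic_dist M x y \<le> curve_length g T"
  unfolding geodesic_dist_def by (rule INF_lower2[of "(g, T)"]) auto

lemma geodesic_dist_nonneg: "0 \<le> geodesic_dist M x y"
  unfolding geodesic_dist_def by (rule INF_greatest) (auto simp: curve_length_nonneg)

lemma geodesic_dist_refl: "x \<in> M \<Longrightarrow> geodesic_dist M x x = 0"
  using geodesic_dist_le_curve_length[of M x x "\<lambda>_. x" 0]
  by (intro antisym geodesic_dist_nonneg) (auto simp: curve_in_def curve_length_const_0)

lemma geodesic_dist_triangle:
  assumes "geodesically_convex M" "x \<in> M" "y \<in> M" "z \<in> M"
  shows "geodesic_dist M x z \<le> geodesic_dist M x y + geodesic_dist M y z"
proof -
  obtain g1 T1 where c1: "curve_in M x y g1 T1" "curve_length g1 T1 = geodesic_dist M x y"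
    using assms unfolding geodesically_convex_def by blast
  obtain g2 T2 where c2: "curve_in M y z g2 T2" "curve_length g2 T2 = geodesic_dist M y z"
    using assms unfolding geodesically_convex_def by blast
  have "geodesic_dist M x z \<le> curve_length (curve_join g1 T1 g2) (T1 + T2)"
    by (rule geodesic_dist_le_curve_length[OF curve_in_join[OF c1(1) c2(1)]])
  also have "\<dots> \<le> curve_length g1 T1 + curve_length g2 T2"
    using c1 c2 by (intro curve_length_join_le) (auto simp: curve_in_def)
  finally show ?thesis using c1 c2 by simp
qed

lemma geodesic_dist_le_chain_sum:
  assumes "geodesically_convex M"
    and local: "\<And>x y. x \<in> M \<Longrightarrow> y \<in> M \<Longrightarrow> norm (y - x) \<le> e \<Longrightarrow>
      geodesic_dist M x y \<le> ereal (f (norm (y - x)))"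
  shows "ws \<noteq> [] \<Longrightarrow> set ws \<subseteq> M \<Longrightarrow> eps_chain e ws \<Longrightarrow>
    geodesic_dist M (hd ws) (last ws) \<le> ereal (chain_sum f ws)"
proof (induction ws)
  case (Cons x ws)
  show ?case
  proof (cases "ws = []")
    case False
    then have "x \<in> M" "hd ws \<in> M" "last ws \<in> M" "set ws \<subseteq> M"
      "norm (hd ws - x) \<le> e" "eps_chain e ws"
      using Cons.prems by (auto simp: successively_Cons)
    then have "geodesic_dist M x (last ws) \<le> geodesic_dist M x (hd ws) + geodesic_dist M (hd ws) (last ws)"
      using geodesic_dist_triangle[OF assms(1)] by simp
    also have "\<dots> \<le> ereal (f (norm (hd ws - x))) + ereal (chain_sum f ws)"
      using local Cons.IH False \<open>x \<in> M\<close> \<open>hd ws \<in> M\<close> \<open>norm (hd ws - x) \<le> e\<close>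
        \<open>set ws \<subseteq> M\<close> \<open>eps_chain e ws\<close> by (intro add_mono) auto
    finally show ?thesis using False by (simp add: chain_sum_Cons)
  qed (use Cons.prems in \<open>simp add: geodesic_dist_refl\<close>)
qed simp

lemma graph_path_iff_eps_chain:
  "graph_path V e u v P \<longleftrightarrow> P \<noteq> [] \<and> hd P = u \<and> last P = v \<and> set P \<subseteq> V \<and> eps_chain e P"
  unfolding graph_path_def successively_conv_nth by simp

lemma graph_dist_le_chain_length: "graph_path V e u v P \<Longrightarrow> graph_dist V e u v \<le> ereal (chain_length P)"
  unfolding graph_dist_def chain_sum_conv_sum by (rule INF_lower2[of P]) auto

lemma graph_dist_greatest:
  "(\<And>P. graph_path V e u v P \<Longrightarrow> B \<le> ereal (chain_length P)) \<Longrightarrow> B \<le> graph_dist V e u v"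
  unfolding graph_dist_def chain_sum_conv_sum by (rule INF_greatest) auto

section \<open>Sets of positive reach\<close>

lemma infdist_segment_le:
  fixes u v :: "'a::real_normed_vector"
  assumes "u \<in> M" "v \<in> M" "s \<in> {0..1}"
  shows "infdist (u + s *\<^sub>R (v - u)) M \<le> norm (v - u) / 2"
proof (cases "s \<le> 1/2")
  case True
  have "infdist (u + s *\<^sub>R (v - u)) M \<le> dist (u + s *\<^sub>R (v - u)) u" by (rule infdist_le[OF assms(1)])
  also have "\<dots> = s * norm (v - u)" using assms(3) by (simp add: dist_norm)
  also have "\<dots> \<le> norm (v - u) / 2" using True mult_right_mono[of s "1/2" "norm (v - u)"] by simp
  finally show ?thesis .
next
  case False
  have "infdist (u + s *\<^sub>R (v - u)) M \<le> dist (u + s *\<^sub>R (v - u)) v" by (rule infdist_le[OF assms(2)])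
  also have "u + s *\<^sub>R (v - u) - v = (1 - s) *\<^sub>R (u - v)" by (simp add: algebra_simps)
  then have "dist (u + s *\<^sub>R (v - u)) v = (1 - s) * norm (v - u)"
    using assms(3) by (simp add: dist_norm norm_minus_commute)
  also have "\<dots> \<le> norm (v - u) / 2" using False mult_right_mono[of "1 - s" "1/2" "norm (v - u)"] by simp
  finally show ?thesis .
qed

lemma apollonius:
  fixes u v z :: "'a::real_inner"
  shows "(norm (u - z))^2 + (norm (v - z))^2 = 2 * (norm (midpoint u v - z))^2 + (norm (v - u))^2 / 2"
proof -
  define a where "a = midpoint u v - z"
  define e where "e = (1/2) *\<^sub>R (u - v)"
  have "u - z = a + e" "v - z = a - e"
    by (simp_all add: a_def e_def midpoint_def algebra_simps flip: scaleR_add_left)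
  then have "(norm (u - z))^2 + (norm (v - z))^2 = (norm (a + e))^2 + (norm (a - e))^2"
    by (simp only:)
  also have "\<dots> = 2 * (norm a)^2 + 2 * (norm e)^2"
    by (simp only: power2_norm_eq_inner)
      (simp add: inner_add_left inner_add_right inner_diff_left inner_diff_right inner_commute)
  also have "(norm e)^2 = (norm (v - u))^2 / 4"
    by (simp add: e_def power_divide norm_minus_commute)
  finally show ?thesis by (simp add: a_def)
qed

lemma funpow_dist_gain:
  fixes f :: "'a::metric_space \<Rightarrow> 'a" and \<phi> :: "'a \<Rightarrow> real"
  assumes step: "\<And>z. dist z y0 \<le> real N * h - h \<Longrightarrow> \<phi> y0 \<le> \<phi> z \<Longrightarrow> dist (f z) z \<le> h \<and> \<phi> z + g \<le> \<phi> (f z)"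
    and "0 \<le> h" "0 \<le> g" "k \<le> N"
  shows "dist ((f ^^ k) y0) y0 \<le> real k * h \<and> \<phi> y0 + real k * g \<le> \<phi> ((f ^^ k) y0)"
  using \<open>k \<le> N\<close>
proof (induction k)
  case (Suc k)
  then have IH: "dist ((f ^^ k) y0) y0 \<le> real k * h" "\<phi> y0 + real k * g \<le> \<phi> ((f ^^ k) y0)" by auto
  have "real (Suc k) * h \<le> real N * h" using Suc.prems assms(2) by (intro mult_right_mono) auto
  then have "real k * h \<le> real N * h - h" by (simp add: algebra_simps)
  moreover have "0 \<le> real k * g" using assms(3) by simp
  ultimately have "dist ((f ^^ Suc k) y0) ((f ^^ k) y0) \<le> h" "\<phi> ((f ^^ k) y0) + g \<le> \<phi> ((f ^^ Suc k) y0)"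
    using IH step[of "(f ^^ k) y0"] by auto
  then show ?case
    using IH dist_triangle[of "(f ^^ Suc k) y0" y0 "(f ^^ k) y0"] by (simp add: algebra_simps)
qed simp

locale reach_at_least =
  fixes M :: "'a::euclidean_space set" and r :: real
  assumes compact_M: "compact M" and M_nonempty: "M \<noteq> {}" and r_pos: "0 < r"
    and nearest_unique: "\<And>z p q. infdist z M < r \<Longrightarrow> p \<in> M \<Longrightarrow> q \<in> M \<Longrightarrow>
      dist z p = infdist z M \<Longrightarrow> dist z q = infdist z M \<Longrightarrow> p = q"
begin

definition nearest :: "'a \<Rightarrow> 'a" where
  "nearest z = (SOME p. p \<in> M \<and> dist z p = infdist z M)"

lemma closed_M: "closed M"
  using compact_M by (rule compact_imp_closed)

lemma nearest_in: "nearest z \<in> M" and dist_nearest: "dist z (nearest z) = infdist z M"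
proof -
  have "\<exists>p. p \<in> M \<and> dist z p = infdist z M"
    using infdist_attains_inf[OF closed_M M_nonempty, of z] by metis
  from someI_ex[OF this] show "nearest z \<in> M" "dist z (nearest z) = infdist z M"
    unfolding nearest_def by auto
qed

lemma nearest_eqI: "infdist z M < r \<Longrightarrow> p \<in> M \<Longrightarrow> dist z p = infdist z M \<Longrightarrow> nearest z = p"
  using nearest_unique[of z "nearest z" p] nearest_in dist_nearest by auto

lemma nearest_self: "p \<in> M \<Longrightarrow> nearest p = p"
  using nearest_eqI[of p p] r_pos by (simp add: in_closed_iff_infdist_zero[OF closed_M M_nonempty])

lemma continuous_on_nearest: "continuous_on {z. infdist z M < r} nearest"
proof -
  let ?S = "{z. infdist z M < r}"
  have "(\<lambda>z. (z, nearest z)) ` ?S = {w \<in> ?S \<times> M. dist (fst w) (snd w) - infdist (fst w) M = 0}"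
    using nearest_in dist_nearest nearest_eqI by (force simp: image_iff)
  moreover have "closedin (top_of_set (?S \<times> M)) {w \<in> ?S \<times> M. dist (fst w) (snd w) - infdist (fst w) M = 0}"
    by (intro continuous_closedin_preimage_constant continuous_intros)
  ultimately show ?thesis
    using continuous_closed_graph_eq[OF compact_M, of nearest ?S] nearest_in by auto
qed

definition push :: "real \<Rightarrow> 'a \<Rightarrow> 'a" where
  "push h z = z + (h / infdist z M) *\<^sub>R (z - nearest z)"

lemma dist_push: "0 < infdist z M \<Longrightarrow> 0 \<le> h \<Longrightarrow> dist (push h z) z = h"
  using dist_nearest[of z] by (simp add: push_def dist_norm norm_minus_commute)

text \<open>Pushing \<open>z\<close> a distance \<open>h\<close> away from its nearest point raises the distance to \<open>M\<close> by almost
  \<open>h\<close>, provided the nearest point moves little: the error term comes from the fact that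
  \<open>nearest (push h z)\<close> is not closer to \<open>z\<close> than \<open>nearest z\<close>.\<close>

lemma infdist_push_ge:
  assumes d: "0 < infdist z M" and h: "0 \<le> h" and \<kappa>: "0 \<le> \<kappa>" "\<kappa> \<le> 1"
    and close: "dist (nearest z) (nearest (push h z)) \<le> sqrt \<kappa> * infdist z M"
  shows "infdist z M + h * (1 - \<kappa>) \<le> infdist (push h z) M"
proof -
  define d where "d = infdist z M"
  define a where "a = z - nearest z"
  define b where "b = nearest z - nearest (push h z)"
  have "0 < d" using d by (simp add: d_def)
  have aa: "a \<bullet> a = d^2"
    using dist_nearest[of z] by (simp add: a_def d_def dist_norm power2_norm_eq_inner[symmetric])
  have "(dist (nearest z) (nearest (push h z)))^2 \<le> (sqrt \<kappa> * d)^2"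
    using close by (intro power_mono) (auto simp: d_def)
  then have bb: "b \<bullet> b \<le> \<kappa> * d^2"
    using \<kappa> by (simp add: b_def dist_norm power2_norm_eq_inner power_mult_distrib)
  have "d \<le> norm (a + b)"
    using infdist_le[OF nearest_in[of "push h z"], of z] by (simp add: a_def b_def d_def dist_norm)
  then have "d^2 \<le> (norm (a + b))^2" using \<open>0 < d\<close> by (intro power_mono) auto
  then have ab: "0 \<le> 2 * (a \<bullet> b) + b \<bullet> b"
    using aa by (simp add: power2_norm_eq_inner inner_add_left inner_add_right inner_commute)
  have "(infdist (push h z) M)^2 = (norm ((1 + h / d) *\<^sub>R a + b))^2"
    using dist_nearest[of "push h z"] by (simp add: push_def a_def b_def d_def dist_norm algebra_simps)
  also have "\<dots> = (1 + h / d)^2 * (a \<bullet> a) + (1 + h / d) * (2 * (a \<bullet> b) + b \<bullet> b) - (h / d) * (b \<bullet> b)"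
    by (simp only: power2_norm_eq_inner)
      (simp add: inner_add_left inner_add_right inner_commute power2_eq_square algebra_simps)
  also have "\<dots> \<ge> (d + h)^2 - h * \<kappa> * d"
  proof -
    have "(1 + h / d)^2 * (a \<bullet> a) = (d + h)^2" using aa \<open>0 < d\<close> by (simp add: field_simps power2_eq_square)
    moreover have "0 \<le> (1 + h / d) * (2 * (a \<bullet> b) + b \<bullet> b)" using ab h \<open>0 < d\<close> by simp
    moreover have "(h / d) * (b \<bullet> b) \<le> (h / d) * (\<kappa> * d^2)" using bb h \<open>0 < d\<close> by (intro mult_left_mono) auto
    moreover have "(h / d) * (\<kappa> * d^2) = h * \<kappa> * d" using \<open>0 < d\<close> by (simp add: power2_eq_square)
    ultimately show ?thesis by linarith
  qed
  also have "(d + h)^2 - h * \<kappa> * d = (d + h * (1 - \<kappa>))^2 + h * \<kappa> * (d + h * (2 - \<kappa>))"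
    by (simp add: algebra_simps power2_eq_square)
  also have "\<dots> \<ge> (d + h * (1 - \<kappa>))^2"
    using \<kappa> h \<open>0 < d\<close> by (simp add: mult_nonneg_nonneg)
  finally have "(d + h * (1 - \<kappa>))^2 \<le> (infdist (push h z) M)^2" .
  then show ?thesis unfolding d_def by (rule power2_le_imp_le) (simp add: infdist_nonneg)
qed

lemma uniformly_continuous_on_nearest_cball:
  assumes "p \<in> M" "R < r"
  shows "uniformly_continuous_on (cball p R) nearest"
proof (intro compact_uniformly_continuous continuous_on_subset[OF continuous_on_nearest] subsetI)
  fix z assume "z \<in> cball p R"
  then show "z \<in> {z. infdist z M < r}" using infdist_le[OF assms(1), of z] assms(2) by (simp add: dist_commute)
qed simp


text \<open>Starting on the normal ray at distance \<open>l0\<close>, repeated small pushes nearly realise the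
  maximal possible gain in distance; uniform continuity of \<open>nearest\<close> keeps the loss per step
  below a fraction \<open>\<kappa>\<close>.\<close>

lemma infdist_push_along_normal:
  assumes p: "p \<in> M" and n: "norm n = 1" and l0: "0 < l0" and on_ray: "infdist (p + l0 *\<^sub>R n) M = l0"
    and s: "0 < s" "l0 + s < r" and \<kappa>: "0 < \<kappa>" "\<kappa> \<le> 1"
  shows "\<exists>z. dist z (p + l0 *\<^sub>R n) \<le> s \<and> l0 + s * (1 - \<kappa>) \<le> infdist z M"
proof -
  define y0 where "y0 = p + l0 *\<^sub>R n"
  define R where "R = (l0 + s + r) / 2"
  have "uniformly_continuous_on (cball p R) nearest"
    using s by (intro uniformly_continuous_on_nearest_cball[OF p]) (simp add: R_def)
  moreover have "0 < l0 * sqrt \<kappa>" using l0 \<kappa> by simp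
  ultimately obtain \<delta> where \<delta>: "0 < \<delta>"
    "\<forall>x\<in>cball p R. \<forall>x'\<in>cball p R. dist x' x < \<delta> \<longrightarrow> dist (nearest x') (nearest x) < l0 * sqrt \<kappa>"
    unfolding uniformly_continuous_on_def by blast
  obtain N :: nat where N: "s / \<delta> < real N" using reals_Archimedean2 by blast
  moreover have "0 < s / \<delta>" using s \<delta> by simp
  ultimately have "0 < real N" by linarith
  define h where "h = s / real N"
  have h: "0 < h" "h < \<delta>" "real N * h = s"
    using N s \<delta> \<open>0 < real N\<close> by (auto simp: h_def field_simps)
  have dist_y0: "dist y0 p = l0" using n l0 by (simp add: y0_def dist_norm)
  have "dist (push h z) z \<le> h \<and> infdist z M + h * (1 - \<kappa>) \<le> infdist (push h z) M"
    if z: "dist z y0 \<le> real N * h - h" "infdist y0 M \<le> infdist z M" for z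
  proof -
    have "0 < infdist z M" using z l0 on_ray by (simp add: y0_def)
    then have step: "dist (push h z) z = h" using h by (simp add: dist_push)
    have "dist z p \<le> l0 + s - h" "dist (push h z) p \<le> l0 + s"
      using dist_triangle[of z p y0] dist_triangle[of "push h z" p z] step dist_y0 z h(3) by linarith+
    then have "z \<in> cball p R" "push h z \<in> cball p R" using s h by (auto simp: R_def dist_commute)
    moreover have "dist (push h z) z < \<delta>" using step h by simp
    ultimately have "dist (nearest (push h z)) (nearest z) < l0 * sqrt \<kappa>" using \<delta>(2) by blast
    also have "\<dots> \<le> sqrt \<kappa> * infdist z M" using z \<kappa> on_ray by (simp add: y0_def mult.commute)
    finally show ?thesis
      using step infdist_push_ge[of z h \<kappa>] \<open>0 < infdist z M\<close> h \<kappa> by (simp add: dist_commute)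
  qed
  then have "dist ((push h ^^ N) y0) y0 \<le> real N * h \<and>
      infdist y0 M + real N * (h * (1 - \<kappa>)) \<le> infdist ((push h ^^ N) y0) M"
    by (rule funpow_dist_gain) (use h \<kappa> in auto)
  then have "dist ((push h ^^ N) y0) y0 \<le> s \<and> l0 + s * (1 - \<kappa>) \<le> infdist ((push h ^^ N) y0) M"
    using h(3) on_ray by (simp add: y0_def mult.assoc[symmetric])
  then show ?thesis unfolding y0_def by blast
qed

text \<open>A maximiser of the distance to \<open>M\<close> over the ball of radius \<open>l1 - l0\<close> around
  \<open>p + l0 n\<close> is at distance \<open>l1\<close> from \<open>M\<close> by \<open>infdist_push_along_normal\<close>, hence also from
  \<open>p\<close>; equality in the triangle inequality puts it on the ray.\<close>

lemma infdist_normal_ray: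
  assumes p: "p \<in> M" and n: "norm n = 1" and l0: "0 < l0" and on_ray: "infdist (p + l0 *\<^sub>R n) M = l0"
    and l1: "l0 \<le> l1" "l1 < r"
  shows "infdist (p + l1 *\<^sub>R n) M = l1"
proof (cases "l1 = l0")
  case False
  define s where "s = l1 - l0"
  have s: "0 < s" "l0 + s < r" using False l1 by (auto simp: s_def)
  define y0 where "y0 = p + l0 *\<^sub>R n"
  obtain zm where zm: "zm \<in> cball y0 s" "\<And>z. z \<in> cball y0 s \<Longrightarrow> infdist z M \<le> infdist zm M"
    using continuous_attains_sup[OF compact_cball _ continuous_on_infdist[OF continuous_on_id], of y0 s M] s
    by auto
  have far: "l1 \<le> infdist zm M"
  proof (rule ccontr)
    assume "\<not> l1 \<le> infdist zm M"
    define \<kappa> where "\<kappa> = min 1 ((l1 - infdist zm M) / (2 * s))"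
    have "0 < \<kappa>" "\<kappa> \<le> 1" using \<open>\<not> l1 \<le> infdist zm M\<close> s by (auto simp: \<kappa>_def)
    then obtain z where z: "dist z y0 \<le> s" "l0 + s * (1 - \<kappa>) \<le> infdist z M"
      using infdist_push_along_normal[OF p n l0 on_ray s] unfolding y0_def by blast
    have "s * \<kappa> \<le> (l1 - infdist zm M) / 2" using s by (simp add: \<kappa>_def min_def field_simps)
    then have "infdist zm M < infdist z M" using z(2) \<open>\<not> l1 \<le> infdist zm M\<close> by (simp add: s_def algebra_simps)
    then show False using zm(2)[of z] z(1) by (simp add: dist_commute)
  qed
  have dist_y0: "dist y0 p = l0" using n l0 by (simp add: y0_def dist_norm)
  have "l1 \<le> dist zm p" using far infdist_le[OF p, of zm] by simp
  moreover have "dist zm p \<le> dist zm y0 + dist y0 p" by (rule dist_triangle)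
  moreover have "dist zm y0 \<le> s" using zm(1) by (simp add: dist_commute)
  ultimately have "dist zm y0 = s" "norm ((zm - y0) + (y0 - p)) = norm (zm - y0) + norm (y0 - p)"
    using dist_y0 by (simp_all add: s_def dist_norm)
  then have "s *\<^sub>R (y0 - p) = l0 *\<^sub>R (zm - y0)"
    using dist_y0 norm_triangle_eq[of "zm - y0" "y0 - p"] by (simp add: dist_norm)
  then have "l0 *\<^sub>R (zm - y0) = l0 *\<^sub>R (s *\<^sub>R n)" by (simp add: y0_def mult.commute)
  then have "zm - y0 = s *\<^sub>R n" using l0 by (metis scaleR_cancel_left less_irrefl)
  then have "zm = p + l1 *\<^sub>R n" by (simp add: y0_def s_def algebra_simps)
  then show ?thesis
    using far infdist_le[OF p, of "p + l1 *\<^sub>R n"] n l0 l1 by (simp add: dist_norm)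
qed (use on_ray in simp)

lemma normal_ray_inner_le:
  assumes p: "p \<in> M" and n: "norm n = 1" and "0 < l0" "infdist (p + l0 *\<^sub>R n) M = l0"
    and l: "l0 \<le> l" "l < r" and b: "b \<in> M"
  shows "2 * l * (n \<bullet> (b - p)) \<le> (norm (b - p))^2"
proof -
  have "infdist (p + l *\<^sub>R n) M = l" using infdist_normal_ray[OF p n assms(3,4) l] .
  then have "l \<le> norm (p + l *\<^sub>R n - b)" using infdist_le[OF b, of "p + l *\<^sub>R n"] by (simp add: dist_norm)
  then have "l^2 \<le> (norm ((p - b) + l *\<^sub>R n))^2"
    using l \<open>0 < l0\<close> by (intro power_mono) (auto simp: algebra_simps)
  also have "\<dots> = (norm (b - p))^2 + 2 * l * (n \<bullet> (p - b)) + l^2"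
    using n power2_norm_eq_inner[of n]
    by (simp only: power2_norm_eq_inner)
      (simp add: inner_add_left inner_add_right inner_commute algebra_simps power2_eq_square)
  finally show ?thesis by (simp add: inner_diff_right algebra_simps)
qed

text \<open>Federer's normal inequality, obtained from \<open>normal_ray_inner_le\<close> by letting \<open>l \<rightarrow> r\<close>.\<close>

lemma normal_inner_le:
  assumes z: "infdist z M < r" and b: "b \<in> M"
  shows "(z - nearest z) \<bullet> (b - nearest z) \<le> infdist z M * (norm (b - nearest z))^2 / (2 * r)"
proof (cases "infdist z M = 0")
  case True
  then have "z \<in> M" using in_closed_iff_infdist_zero[OF closed_M M_nonempty] by simp
  then show ?thesis using True by (simp add: nearest_self)
next
  case False
  define d where "d = infdist z M"
  define p where "p = nearest z"
  define n where "n = (1 / d) *\<^sub>R (z - p)"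
  have "0 < d" "d < r" using False infdist_nonneg[of z M] z by (simp_all add: d_def)
  have "norm (z - p) = d" using dist_nearest[of z] by (simp add: d_def p_def dist_norm)
  then have n: "norm n = 1" and z_eq: "z = p + d *\<^sub>R n" using \<open>0 < d\<close> by (simp_all add: n_def)
  from z_eq have "p + d *\<^sub>R n = z" by simp
  then have on_ray: "infdist (p + d *\<^sub>R n) M = d" by (simp add: d_def)
  have "n \<bullet> (b - p) \<le> (norm (b - p))^2 / (2 * r)"
  proof (cases "n \<bullet> (b - p) \<le> 0")
    case True
    moreover have "0 \<le> (norm (b - p))^2 / (2 * r)" using r_pos by simp
    ultimately show ?thesis by linarith
  next
    case False
    have "r \<le> (norm (b - p))^2 / (2 * (n \<bullet> (b - p)))"
    proof (rule dense_le_bounded[OF \<open>d < r\<close>])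
      fix l assume "d < l" "l < r"
      then have "2 * l * (n \<bullet> (b - p)) \<le> (norm (b - p))^2"
        using normal_ray_inner_le[OF nearest_in n \<open>0 < d\<close> _ _ _ b] on_ray by (simp add: p_def)
      then show "l \<le> (norm (b - p))^2 / (2 * (n \<bullet> (b - p)))" using False by (simp add: field_simps)
    qed
    then show ?thesis using False r_pos by (simp add: field_simps)
  qed
  then have "d * (n \<bullet> (b - p)) \<le> d * ((norm (b - p))^2 / (2 * r))"
    using \<open>0 < d\<close> by (intro mult_left_mono) auto
  moreover have "(z - p) \<bullet> (b - p) = d * (n \<bullet> (b - p))" using z_eq by simp
  ultimately show ?thesis by (simp add: d_def p_def)
qed

lemma nearest_lipschitz:
  assumes q: "q < r" and x: "infdist x M \<le> q" and y: "infdist y M \<le> q"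
  shows "norm (nearest x - nearest y) \<le> r / (r - q) * norm (x - y)"
proof -
  define a where "a = nearest x"
  define b where "b = nearest y"
  have "0 \<le> q" using x infdist_nonneg[of x M] by simp
  have "(x - a) \<bullet> (b - a) \<le> infdist x M * (norm (b - a))^2 / (2 * r)"
    using normal_inner_le[of x b] x q by (simp add: a_def b_def nearest_in)
  also have "\<dots> \<le> q * (norm (b - a))^2 / (2 * r)"
    using x r_pos by (intro divide_right_mono mult_right_mono) auto
  finally have nx: "(x - a) \<bullet> (b - a) \<le> q * (norm (b - a))^2 / (2 * r)" .
  have "(y - b) \<bullet> (a - b) \<le> infdist y M * (norm (b - a))^2 / (2 * r)"
    using normal_inner_le[of y a] y q by (simp add: a_def b_def nearest_in norm_minus_commute)
  also have "\<dots> \<le> q * (norm (b - a))^2 / (2 * r)"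
    using y r_pos by (intro divide_right_mono mult_right_mono) auto
  finally have ny: "(y - b) \<bullet> (a - b) \<le> q * (norm (b - a))^2 / (2 * r)" .
  have "(x - a) \<bullet> (b - a) + (y - b) \<bullet> (a - b) = (norm (b - a))^2 - (y - x) \<bullet> (b - a)"
    by (simp only: power2_norm_eq_inner) (simp add: inner_diff_left inner_diff_right inner_commute algebra_simps)
  moreover have "q * (norm (b - a))^2 / (2 * r) + q * (norm (b - a))^2 / (2 * r)
      = (norm (b - a))^2 - (norm (b - a))^2 * (1 - q / r)"
    using r_pos by (simp add: field_simps)
  ultimately have "(norm (b - a))^2 * (1 - q / r) \<le> (y - x) \<bullet> (b - a)" using nx ny by linarith
  also have "\<dots> \<le> norm (y - x) * norm (b - a)" by (rule norm_cauchy_schwarz)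
  finally have main: "norm (b - a) * (norm (b - a) * (1 - q / r)) \<le> norm (b - a) * norm (y - x)"
    by (simp add: power2_eq_square algebra_simps)
  show ?thesis
  proof (cases "b = a")
    case False
    then have "norm (b - a) * (1 - q / r) \<le> norm (y - x)" using main by simp
    then have "norm (b - a) * (r - q) \<le> norm (y - x) * r" using r_pos by (simp add: field_simps)
    then show ?thesis using q by (simp add: a_def b_def field_simps norm_minus_commute)
  qed (use q \<open>0 \<le> q\<close> r_pos in \<open>simp add: a_def b_def\<close>)
qed

text \<open>The bound is the length of the projected chord: \<open>r / (r - t/2)\<close> is the Lipschitz constant
  of \<open>nearest\<close> at distance at most \<open>t/2\<close> from \<open>M\<close>.\<close>

lemma geodesic_dist_le_projected_chord:
  assumes u: "u \<in> M" and v: "v \<in> M" and t: "norm (v - u) < 2 * r"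
  shows "geodesic_dist M u v \<le> ereal (r / (r - norm (v - u) / 2) * norm (v - u))"
proof -
  define L where "L = r / (r - norm (v - u) / 2) * norm (v - u)"
  define g where "g s = nearest (u + s *\<^sub>R (v - u))" for s
  have seg: "infdist (u + s *\<^sub>R (v - u)) M \<le> norm (v - u) / 2" if "s \<in> {0..1}" for s
    using infdist_segment_le[OF u v that] .
  have "curve_in M u v g 1"
    unfolding curve_in_def
  proof (intro conjI)
    show "continuous_on {0..1} g" unfolding g_def
      using seg t by (intro continuous_on_compose2[OF continuous_on_nearest] continuous_intros) force+
  qed (auto simp: g_def nearest_in nearest_self u v)
  moreover have "curve_length g 1 \<le> ereal L"
  proof (rule curve_length_le)
    fix ts :: "real list" assume ts: "sorted ts" "set ts \<subseteq> {0..1}"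
    have "chain_length (map g ts) \<le> L * chain_length ts"
    proof (rule chain_length_map_le)
      fix s s' assume "s \<in> set ts" "s' \<in> set ts"
      then have "s \<in> {0..1}" "s' \<in> {0..1}" using ts by auto
      then have "norm (g s' - g s)
          \<le> r / (r - norm (v - u) / 2) * norm ((u + s' *\<^sub>R (v - u)) - (u + s *\<^sub>R (v - u)))"
        unfolding g_def using t by (intro nearest_lipschitz seg) auto
      also have "(u + s' *\<^sub>R (v - u)) - (u + s *\<^sub>R (v - u)) = (s' - s) *\<^sub>R (v - u)"
        by (simp add: algebra_simps)
      finally show "norm (g s' - g s) \<le> L * \<bar>s' - s\<bar>" by (simp add: L_def ac_simps)
    qed
    also have "\<dots> \<le> L"
    proof (cases "ts = []")
      case False
      then have "last ts \<in> {0..1}" "hd ts \<in> {0..1}" using ts(2) last_in_set hd_in_set by blast+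
      then have "chain_length ts \<le> 1" using ts(1) False by (simp add: chain_length_sorted)
      moreover have "0 \<le> L" using t r_pos by (simp add: L_def)
      ultimately show ?thesis by (simp add: mult_left_le)
    qed (use t r_pos in \<open>simp add: L_def\<close>)
    finally show "ereal (chain_length (map g ts)) \<le> ereal L" by simp
  qed
  ultimately show ?thesis using geodesic_dist_le_curve_length[of M u v g 1] by (simp add: L_def)
qed

text \<open>At the nearest point \<open>z\<close> of the midpoint, the normal inequalities for \<open>u\<close> and \<open>v\<close> add up to
  \<open>2 \<rho>\<^sup>2 \<le> \<rho> (2 \<rho>\<^sup>2 + t\<^sup>2 / 2) / (2 r)\<close>, a quadratic inequality in \<open>\<rho>\<close>.\<close>

lemma infdist_midpoint_le_sagitta:
  assumes u: "u \<in> M" and v: "v \<in> M" and t: "norm (v - u) < 2 * r"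
  shows "infdist (midpoint u v) M \<le> r - sqrt (r^2 - (norm (v - u))^2 / 4)"
proof -
  define t where "t = norm (v - u)"
  define \<rho> where "\<rho> = infdist (midpoint u v) M"
  define w where "w = midpoint u v - nearest (midpoint u v)"
  have "\<rho> \<le> dist u (midpoint u v)" unfolding \<rho>_def by (metis infdist_le[OF u] dist_commute)
  then have \<rho>_le: "\<rho> \<le> t / 2"
    using dist_midpoint(1)[of u v] by (simp add: t_def dist_norm norm_minus_commute)
  then have "infdist (midpoint u v) M < r" using t by (simp add: \<rho>_def t_def)
  then have "w \<bullet> (u - nearest (midpoint u v)) + w \<bullet> (v - nearest (midpoint u v))
      \<le> \<rho> * (norm (u - nearest (midpoint u v)))^2 / (2 * r) + \<rho> * (norm (v - nearest (midpoint u v)))^2 / (2 * r)"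
    using normal_inner_le u v by (simp add: w_def \<rho>_def add_mono)
  also have "\<dots> = \<rho> * (2 * \<rho>^2 + t^2 / 2) / (2 * r)"
    using apollonius[of u "nearest (midpoint u v)" v] dist_nearest[of "midpoint u v"]
    by (simp add: \<rho>_def t_def dist_norm add_divide_distrib[symmetric] distrib_left[symmetric])
  also have "w \<bullet> (u - nearest (midpoint u v)) + w \<bullet> (v - nearest (midpoint u v)) = 2 * \<rho>^2"
  proof -
    have "(u - nearest (midpoint u v)) + (v - nearest (midpoint u v)) = 2 *\<^sub>R w"
      by (simp add: w_def midpoint_def algebra_simps scaleR_2)
    then show ?thesis using dist_nearest[of "midpoint u v"]
      by (simp add: inner_add_right[symmetric] \<rho>_def w_def dist_norm flip: power2_norm_eq_inner)
  qed
  finally have quad: "2 * \<rho>^2 \<le> \<rho> * (2 * \<rho>^2 + t^2 / 2) / (2 * r)" .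
  have "sqrt (r^2 - t^2 / 4) \<le> r - \<rho>"
  proof (cases "\<rho> = 0")
    case True
    then show ?thesis using r_pos real_sqrt_le_mono[of "r^2 - t^2 / 4" "r^2"] by simp
  next
    case False
    then have "0 < \<rho>" by (simp add: \<rho>_def infdist_nonneg order_less_le)
    have "\<rho> * (4 * r * \<rho>) \<le> \<rho> * (2 * \<rho>^2 + t^2 / 2)"
      using quad r_pos by (simp add: field_simps power2_eq_square)
    then have "4 * r * \<rho> \<le> 2 * \<rho>^2 + t^2 / 2" using \<open>0 < \<rho>\<close> by simp
    then have "r^2 - t^2 / 4 \<le> (r - \<rho>)^2" by (simp add: power2_eq_square algebra_simps)
    then show ?thesis using \<rho>_le t by (intro real_le_lsqrt) (auto simp: t_def)
  qed
  then show ?thesis by (simp add: \<rho>_def t_def)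
qed

lemma nearest_midpoint_split:
  assumes u: "u \<in> M" and v: "v \<in> M" and t: "norm (v - u) < 2 * r"
  defines "z \<equiv> nearest (midpoint u v)"
  shows "z \<in> M"
    and "norm (z - u) \<le> norm (v - u) / 2 + (norm (v - u))^2 / (4 * r)"
    and "norm (v - z) \<le> norm (v - u) / 2 + (norm (v - u))^2 / (4 * r)"
    and "arcsin (norm (z - u) / (2 * r)) + arcsin (norm (v - z) / (2 * r)) \<le> arcsin (norm (v - u) / (2 * r))"
proof -
  define t where "t = norm (v - u)"
  define c where "c = sqrt (r^2 - t^2 / 4)"
  define \<rho> where "\<rho> = norm (midpoint u v - z)"
  have \<rho>: "0 \<le> \<rho>" "\<rho> \<le> r - c"
    using infdist_midpoint_le_sagitta[OF u v t] dist_nearest[of "midpoint u v"]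
    by (simp_all add: \<rho>_def z_def c_def t_def dist_norm infdist_nonneg)
  have sag: "r - c \<le> t^2 / (4 * r)" using sagitta_le[of r t] r_pos t by (simp add: c_def t_def)
  show "z \<in> M" by (simp add: z_def nearest_in)
  have "norm (z - u) \<le> \<rho> + t / 2" "norm (v - z) \<le> \<rho> + t / 2"
    using norm_triangle_ineq[of "z - midpoint u v" "midpoint u v - u"]
      norm_triangle_ineq[of "v - midpoint u v" "midpoint u v - z"]
      dist_midpoint[of u v] by (simp_all add: \<rho>_def t_def dist_norm norm_minus_commute)
  then show "norm (z - u) \<le> norm (v - u) / 2 + (norm (v - u))^2 / (4 * r)"
    and "norm (v - z) \<le> norm (v - u) / 2 + (norm (v - u))^2 / (4 * r)"
    using \<rho> sag by (simp_all add: t_def)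
  have "t^2 < (2 * r)^2" using t by (intro power_strict_mono) (auto simp: t_def)
  then have "c^2 = r^2 - t^2 / 4" by (simp add: c_def power_mult_distrib)
  moreover have "\<rho>^2 \<le> (r - c)^2" using \<rho> by (intro power_mono) auto
  ultimately have "2 * \<rho>^2 + t^2 / 2 \<le> 4 * r * (r - c)" by (simp add: power2_eq_square algebra_simps)
  then have "(norm (z - u))^2 + (norm (v - z))^2 \<le> 4 * r * (r - sqrt (r^2 - t^2 / 4))"
    using apollonius[of u z v] by (simp add: \<rho>_def c_def t_def norm_minus_commute)
  then show "arcsin (norm (z - u) / (2 * r)) + arcsin (norm (v - z) / (2 * r)) \<le> arcsin (norm (v - u) / (2 * r))"
    using r_pos t by (intro arcsin_add_arcsin_le) (auto simp: t_def)
qed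

text \<open>Splitting at the nearest point of the midpoint shrinks all chords by the factor
  \<open>1/2 + T0 / (4 r)\<close> without increasing the sum of the arc angles.\<close>

lemma arc_subdivision:
  assumes T0: "T0 < 2 * r"
  shows "0 \<le> T \<Longrightarrow> T \<le> T0 \<Longrightarrow> u \<in> M \<Longrightarrow> v \<in> M \<Longrightarrow> norm (v - u) \<le> T \<Longrightarrow>
    \<exists>ws. ws \<noteq> [] \<and> hd ws = u \<and> last ws = v \<and> set ws \<subseteq> M \<and> eps_chain ((1/2 + T0 / (4 * r))^k * T) ws
      \<and> chain_sum (\<lambda>c. arcsin (c / (2 * r))) ws \<le> arcsin (norm (v - u) / (2 * r))"
proof (induction k arbitrary: T u v)
  case 0
  then show ?case by (intro exI[of _ "[u, v]"]) auto
next
  case (Suc k)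
  define q where "q = 1/2 + T0 / (4 * r)"
  define t where "t = norm (v - u)"
  have t: "0 \<le> t" "t \<le> T" "t < 2 * r" using Suc.prems T0 by (auto simp: t_def)
  have q: "0 \<le> q" "q \<le> 1" using T0 r_pos Suc.prems by (auto simp: q_def field_simps)
  define z where "z = nearest (midpoint u v)"
  note split = nearest_midpoint_split[OF Suc.prems(3,4) t(3)[unfolded t_def], folded z_def t_def]
  have "t * t \<le> t * T0" using t Suc.prems by (intro mult_left_mono) auto
  then have "t / 2 + t^2 / (4 * r) \<le> q * t"
    using r_pos by (simp add: q_def power2_eq_square field_simps)
  also have "\<dots> \<le> q * T" using q t by (intro mult_left_mono)
  finally have half: "t / 2 + t^2 / (4 * r) \<le> q * T" .
  have qT: "0 \<le> q * T" "q * T \<le> T0" using q Suc.prems by (auto intro: order_trans[OF mult_left_le_one_le])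
  obtain ws1 where ws1: "ws1 \<noteq> []" "hd ws1 = u" "last ws1 = z" "set ws1 \<subseteq> M" "eps_chain (q^k * (q * T)) ws1"
     "chain_sum (\<lambda>c. arcsin (c / (2 * r))) ws1 \<le> arcsin (norm (z - u) / (2 * r))"
    using Suc.IH[OF qT Suc.prems(3) split(1)] split(2) half unfolding q_def by fastforce
  obtain ws2 where ws2: "ws2 \<noteq> []" "hd ws2 = z" "last ws2 = v" "set ws2 \<subseteq> M" "eps_chain (q^k * (q * T)) ws2"
     "chain_sum (\<lambda>c. arcsin (c / (2 * r))) ws2 \<le> arcsin (norm (v - z) / (2 * r))"
    using Suc.IH[OF qT split(1) Suc.prems(4)] split(3) half unfolding q_def by fastforce
  have "last ws1 = hd ws2" using ws1 ws2 by simp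
  have "last (ws1 @ tl ws2) = v"
    using ws1 ws2 by (cases ws2) (auto simp: last_append)
  moreover have "eps_chain (q^Suc k * T) (ws1 @ tl ws2)"
    using successively_append_tl[OF ws1(1) ws2(1) \<open>last ws1 = hd ws2\<close>] ws1(5) ws2(5)
    by (simp add: ac_simps)
  moreover have "chain_sum (\<lambda>c. arcsin (c / (2 * r))) (ws1 @ tl ws2) \<le> arcsin (t / (2 * r))"
    using chain_sum_append_tl[OF ws1(1) ws2(1) \<open>last ws1 = hd ws2\<close>] ws1(6) ws2(6) split(4) by simp
  moreover have "set (ws1 @ tl ws2) \<subseteq> M" using ws1 ws2 by (auto dest: list.set_sel(2))
  ultimately show ?case using ws1 unfolding q_def t_def by (intro exI[of _ "ws1 @ tl ws2"]) auto
qed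

lemma geodesic_dist_le_chain_arcs:
  assumes gc: "geodesically_convex M" and ws: "ws \<noteq> []" "set ws \<subseteq> M" "eps_chain C ws" and C: "C < 2 * r"
  shows "geodesic_dist M (hd ws) (last ws)
    \<le> ereal (r / (r - C / 2) * (2 * r) * chain_sum (\<lambda>c. arcsin (c / (2 * r))) ws)"
proof -
  define f where "f c = r / (r - C / 2) * (2 * r * arcsin (c / (2 * r)))" for c
  have "geodesic_dist M x y \<le> ereal (f (norm (y - x)))"
    if xy: "x \<in> M" "y \<in> M" "norm (y - x) \<le> C" for x y
  proof -
    have "geodesic_dist M x y \<le> ereal (r / (r - norm (y - x) / 2) * norm (y - x))"
      using geodesic_dist_le_projected_chord[OF xy(1,2)] xy(3) C by simp
    also have "r / (r - norm (y - x) / 2) * norm (y - x) \<le> r / (r - C / 2) * norm (y - x)"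
      using xy(3) C r_pos by (intro mult_right_mono divide_left_mono mult_pos_pos) auto
    also have "\<dots> \<le> f (norm (y - x))" unfolding f_def
      using chord_le_arc[OF r_pos, of "norm (y - x)"] xy(3) C r_pos by (intro mult_left_mono) auto
    finally show ?thesis by simp
  qed
  then have "geodesic_dist M (hd ws) (last ws) \<le> ereal (chain_sum f ws)"
    by (rule geodesic_dist_le_chain_sum[OF gc _ ws])
  also have "chain_sum f ws = r / (r - C / 2) * (2 * r) * chain_sum (\<lambda>c. arcsin (c / (2 * r))) ws"
    unfolding f_def by (simp add: chain_sum_scale[symmetric] mult.assoc)
  finally show ?thesis .
qed

text \<open>The arc bound is the limit of \<open>geodesic_dist_le_chain_arcs\<close> along ever finer subdivisions.\<close>

lemma geodesic_dist_le_arc: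
  assumes gc: "geodesically_convex M" and u: "u \<in> M" and v: "v \<in> M" and t: "norm (v - u) < 2 * r"
  shows "geodesic_dist M u v \<le> ereal (2 * r * arcsin (norm (v - u) / (2 * r)))"
proof -
  define t where "t = norm (v - u)"
  define q where "q = 1/2 + t / (4 * r)"
  define A where "A = 2 * r * arcsin (t / (2 * r))"
  have t0: "0 \<le> t" and tr: "t < 2 * r" using t by (auto simp: t_def)
  have q: "0 \<le> q" "q < 1" using t0 tr r_pos by (auto simp: q_def field_simps)
  have bound: "geodesic_dist M u v \<le> ereal (r / (r - q^k * t / 2) * A)" for k
  proof -
    have "q^k * t \<le> t" using q t0 by (intro mult_left_le_one_le) (auto intro: power_le_one)
    then have fine: "q^k * t < 2 * r" "0 < r / (r - q^k * t / 2) * (2 * r)" using tr r_pos by auto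
    obtain ws where ws: "ws \<noteq> []" "hd ws = u" "last ws = v" "set ws \<subseteq> M" "eps_chain (q^k * t) ws"
      "chain_sum (\<lambda>c. arcsin (c / (2 * r))) ws \<le> arcsin (t / (2 * r))"
      using arc_subdivision[OF tr t0 order_refl u v] unfolding t_def q_def by auto
    have "geodesic_dist M u v
        \<le> ereal (r / (r - q^k * t / 2) * (2 * r) * chain_sum (\<lambda>c. arcsin (c / (2 * r))) ws)"
      using geodesic_dist_le_chain_arcs[OF gc ws(1,4,5) fine(1)] ws(2,3) by simp
    also have "\<dots> \<le> ereal (r / (r - q^k * t / 2) * (2 * r) * arcsin (t / (2 * r)))"
      using mult_left_mono[OF ws(6) less_imp_le[OF fine(2)]] by simp
    finally show ?thesis by (simp add: A_def mult.assoc)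
  qed
  have "(\<lambda>k. r / (r - q^k * t / 2) * A) \<longlonglongrightarrow> r / (r - 0 * t / 2) * A"
    using q r_pos by (intro tendsto_intros LIMSEQ_power_zero) auto
  then have lim: "(\<lambda>k. r / (r - q^k * t / 2) * A) \<longlonglongrightarrow> A" using r_pos by simp
  obtain g where g: "geodesic_dist M u v = ereal g"
    using bound[of 0] geodesic_dist_nonneg[of M u v] by (cases "geodesic_dist M u v") auto
  have "g \<le> A" using lim by (rule LIMSEQ_le_const) (use bound g in auto)
  then show ?thesis using g by (simp add: A_def t_def)
qed

lemma graph_dist_ge_arc_chord_factor:
  assumes gc: "geodesically_convex M" and e: "0 < e" "e < 2 * r" and V: "V \<subseteq> M" "x \<in> V" "y \<in> V"
  shows "ereal (arc_chord_factor e r) * geodesic_dist M x y \<le> graph_dist V e x y"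
proof (rule graph_dist_greatest)
  fix P assume P: "graph_path V e x y P"
  define c where "c = arc_chord_factor e r"
  have "0 < c" unfolding c_def using r_pos e by (intro arc_chord_factor_pos) auto
  have "geodesic_dist M a b \<le> ereal (norm (b - a) / c)"
    if ab: "a \<in> M" "b \<in> M" "norm (b - a) \<le> e" for a b
  proof -
    have "geodesic_dist M a b \<le> ereal (2 * r * arcsin (norm (b - a) / (2 * r)))"
      using geodesic_dist_le_arc[OF gc ab(1,2)] ab(3) e by simp
    also have "c * (2 * r * arcsin (norm (b - a) / (2 * r))) \<le> norm (b - a)"
      unfolding c_def using arc_chord_factor_mult_arc_le[OF r_pos _ ab(3) e(2)] by simp
    then have "2 * r * arcsin (norm (b - a) / (2 * r)) \<le> norm (b - a) / c"
      using \<open>0 < c\<close> by (simp add: field_simps)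
    finally show ?thesis by simp
  qed
  moreover have "P \<noteq> []" "hd P = x" "last P = y" "set P \<subseteq> M" "eps_chain e P"
    using P V by (auto simp: graph_path_iff_eps_chain)
  ultimately have "geodesic_dist M x y \<le> ereal (chain_sum (\<lambda>s. s / c) P)"
    using geodesic_dist_le_chain_sum[OF gc, of e "\<lambda>s. s / c" P] by simp
  also have "chain_sum (\<lambda>s. s / c) P = chain_length P / c"
    using chain_sum_scale[of "1 / c" "\<lambda>s. s" P] by simp
  finally have "ereal c * geodesic_dist M x y \<le> ereal c * ereal (chain_length P / c)"
    using \<open>0 < c\<close> by (intro ereal_mult_left_mono) auto
  then show "ereal c * geodesic_dist M x y \<le> ereal (chain_length P)" using \<open>0 < c\<close> by simp
qed

end

section \<open>Greedy routing through the samples\<close>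

lemma chain_split_first_far:
  assumes "ps \<noteq> []" "0 \<le> c" "c < norm (last ps - hd ps)"
  obtains xs w zs where "ps = xs @ w # zs" "xs \<noteq> []" "c < norm (w - hd ps)"
    "\<forall>x\<in>set xs. norm (x - hd ps) \<le> c"
proof -
  have "\<exists>w\<in>set ps. c < norm (w - hd ps)" using assms by (intro bexI[of _ "last ps"]) auto
  then obtain xs w zs where split: "ps = xs @ w # zs" "c < norm (w - hd ps)"
    "\<forall>x\<in>set xs. \<not> c < norm (x - hd ps)"
    using split_list_first_prop[of ps "\<lambda>w. c < norm (w - hd ps)"] by blast
  moreover have "xs \<noteq> []" using split assms(2) by (cases xs) auto
  ultimately show ?thesis using that by (simp add: not_less)
qed

text \<open>The part of the chain up to the first point \<open>w\<close> farther than \<open>e' - \<eta>\<close> from its start is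
  longer than \<open>e' - \<eta>\<close>, so it pays for a detour of \<open>2 \<delta>\<close> at the relative cost
  \<open>2 \<delta> / (e' - \<eta>)\<close>.\<close>

lemma eps_chain_hop:
  fixes ps :: "'a::real_normed_vector list"
  assumes par: "0 < \<eta>" "\<eta> < e'" "0 \<le> \<delta>"
    and ps: "ps \<noteq> []" "eps_chain \<eta> ps" and far: "e' - \<eta> < norm (last ps - hd ps)"
  obtains w zs where "length (w # zs) < length ps" "last (w # zs) = last ps" "eps_chain \<eta> (w # zs)"
    "set (w # zs) \<subseteq> set ps" "norm (w - hd ps) \<le> e'"
    "norm (w - hd ps) + 2 * \<delta> \<le> (1 + 2 * \<delta> / (e' - \<eta>)) * (chain_length ps - chain_length (w # zs))"
proof -
  define K where "K = 2 * \<delta> / (e' - \<eta>)"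
  obtain xs w zs where split: "ps = xs @ w # zs" "xs \<noteq> []"
    "e' - \<eta> < norm (w - hd ps)" "\<forall>x\<in>set xs. norm (x - hd ps) \<le> e' - \<eta>"
    using chain_split_first_far[OF ps(1) _ far] par by auto
  have chains: "norm (w - last xs) \<le> \<eta>" "eps_chain \<eta> (w # zs)"
    using ps(2) split(1,2) by (simp_all add: successively_append_iff)
  have "norm (w - hd ps) \<le> norm (w - last xs) + norm (last xs - hd ps)"
    using norm_triangle_ineq[of "w - last xs" "last xs - hd ps"] by simp
  moreover have "norm (last xs - hd ps) \<le> e' - \<eta>" using split(2,4) by simp
  ultimately have "norm (w - hd ps) \<le> e'" using chains(1) by linarith
  have "0 \<le> K" using par by (simp add: K_def)
  have "norm (w - hd ps) \<le> chain_length (xs @ [w])"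
    using dist_le_chain_length[of "xs @ [w]"] split by simp
  moreover have "2 * \<delta> \<le> K * norm (w - hd ps)"
    using split(3) par \<open>0 \<le> K\<close> mult_left_mono[of "e' - \<eta>" "norm (w - hd ps)" K] by (simp add: K_def)
  ultimately have "norm (w - hd ps) + 2 * \<delta> \<le> (1 + K) * chain_length (xs @ [w])"
    using mult_left_mono[of "norm (w - hd ps)" "chain_length (xs @ [w])" K] \<open>0 \<le> K\<close>
    by (simp add: algebra_simps)
  moreover have "chain_length ps = chain_length (xs @ [w]) + chain_length (w # zs)"
    using split by (simp add: chain_sum_append chain_sum_snoc)
  ultimately show ?thesis
    using split(1,2) chains(2) \<open>norm (w - hd ps) \<le> e'\<close> by (intro that[of w zs]) (auto simp: K_def)
qed

text \<open>Greedy routing along a fine chain through points that are \<open>\<delta>\<close>-close to \<open>V\<close>: from the current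
  vertex jump to a vertex near the first chain point farther than \<open>e' - \<eta>\<close>.\<close>

lemma greedy_graph_path:
  fixes V :: "'a::real_normed_vector set"
  assumes par: "0 < \<eta>" "\<eta> < e'" "0 \<le> \<delta>" "e' + 2 * \<delta> \<le> e" and y: "y \<in> V"
  shows "ps \<noteq> [] \<Longrightarrow> last ps = y \<Longrightarrow> eps_chain \<eta> ps \<Longrightarrow> \<forall>p\<in>set ps. \<exists>q\<in>V. norm (q - p) \<le> \<delta> \<Longrightarrow>
    u \<in> V \<Longrightarrow> norm (u - hd ps) \<le> \<delta> \<Longrightarrow>
    \<exists>P. graph_path V e u y P \<and> chain_length P \<le> norm (u - hd ps) + (1 + 2 * \<delta> / (e' - \<eta>)) * chain_length ps"
proof (induction "length ps" arbitrary: ps u rule: less_induct)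
  case less
  define p where "p = hd ps"
  define K where "K = 2 * \<delta> / (e' - \<eta>)"
  have "0 \<le> K * chain_length ps"
    using par chain_sum_nonneg[of "\<lambda>s. s" ps] by (simp add: K_def)
  show ?case
  proof (cases "norm (y - p) \<le> e'")
    case True
    have "norm (y - u) \<le> norm (y - p) + norm (u - p)"
      using norm_triangle_ineq[of "y - p" "p - u"] by (simp add: norm_minus_commute)
    moreover have "norm (y - p) \<le> chain_length ps"
      using dist_le_chain_length[OF less.prems(1)] less.prems(2) by (simp add: p_def)
    ultimately have "chain_length [u, y] \<le> norm (u - p) + (1 + K) * chain_length ps"
      using \<open>0 \<le> K * chain_length ps\<close> by (simp add: norm_minus_commute algebra_simps)
    moreover have "graph_path V e u y [u, y]"
      using \<open>norm (y - u) \<le> _\<close> True less.prems(5,6) y par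
      by (simp add: graph_path_iff_eps_chain p_def norm_minus_commute)
    ultimately show ?thesis by (auto simp: K_def p_def)
  next
    case False
    then have "e' - \<eta> < norm (last ps - hd ps)" using less.prems(2) par by (simp add: p_def)
    then obtain w zs where hop: "length (w # zs) < length ps" "last (w # zs) = last ps"
      "eps_chain \<eta> (w # zs)" "set (w # zs) \<subseteq> set ps" "norm (w - p) \<le> e'"
      "norm (w - p) + 2 * \<delta> \<le> (1 + K) * (chain_length ps - chain_length (w # zs))"
      using eps_chain_hop[OF par(1-3) less.prems(1,3)] unfolding p_def K_def by blast
    obtain q where q: "q \<in> V" "norm (q - w) \<le> \<delta>" using less.prems(4) hop(4) by auto
    have "\<forall>p\<in>set (w # zs). \<exists>q\<in>V. norm (q - p) \<le> \<delta>" using less.prems(4) hop(4) by blast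
    obtain P' where P': "graph_path V e q y P'"
      "chain_length P' \<le> norm (q - w) + (1 + K) * chain_length (w # zs)"
      using less.hyps[OF hop(1) _ hop(2)[unfolded less.prems(2)] hop(3) \<open>\<forall>p\<in>set (w # zs). _\<close> q(1)] q(2)
      by (auto simp: K_def)
    have qu: "norm (q - u) \<le> norm (q - w) + norm (w - p) + norm (u - p)"
      using norm_triangle_ineq[of "q - w" "w - u"] norm_triangle_ineq[of "w - p" "p - u"]
      by (simp add: norm_minus_commute)
    then have "norm (q - u) \<le> e" using q(2) hop(5) less.prems(6) par by (simp add: p_def)
    then have "graph_path V e u y (u # P')"
      using P'(1) less.prems(5) by (auto simp: graph_path_iff_eps_chain successively_Cons)
    moreover have "chain_length (u # P') = norm (q - u) + chain_length P'"
      using P'(1) by (simp add: chain_sum_Cons graph_path_iff_eps_chain)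
    ultimately show ?thesis
      using P'(2) qu q(2) hop(6) by (intro exI[of _ "u # P'"]) (simp add: K_def p_def algebra_simps)
  qed
qed

lemma curve_fine_chain:
  fixes g :: "real \<Rightarrow> 'a::real_normed_vector"
  assumes c: "curve_in M x y g T" and "0 < \<eta>"
  obtains ps where "ps \<noteq> []" "hd ps = x" "last ps = y" "set ps \<subseteq> M" "eps_chain \<eta> ps"
    "ereal (chain_length ps) \<le> curve_length g T"
proof -
  have T: "0 \<le> T" and "continuous_on {0..T} g" "g ` {0..T} \<subseteq> M" "g 0 = x" "g T = y"
    using c by (auto simp: curve_in_def)
  then have "uniformly_continuous_on {0..T} g" by (intro compact_uniformly_continuous) auto
  then obtain d where d: "0 < d" "\<And>s s'. s \<in> {0..T} \<Longrightarrow> s' \<in> {0..T} \<Longrightarrow> dist s' s < d \<Longrightarrow> dist (g s') (g s) < \<eta>"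
    using \<open>0 < \<eta>\<close> unfolding uniformly_continuous_on_def by metis
  obtain N :: nat where N: "T / d < real N" using reals_Archimedean2 by blast
  moreover have "0 \<le> T / d" using T d by simp
  ultimately have "0 < real N" by linarith
  with N d have "T / real N < d" by (simp add: field_simps)
  define ts where "ts = map (\<lambda>j. real j * T / real N) [0..<Suc N]"
  have nth_ts: "i < Suc N \<Longrightarrow> ts ! i = real i * T / real N" for i by (simp add: ts_def del: upt_Suc)
  have len: "length ts = Suc N" by (simp add: ts_def)
  have "sorted ts" unfolding sorted_iff_nth_mono
    using T \<open>0 < real N\<close> by (auto simp: len nth_ts intro!: divide_right_mono mult_right_mono)
  moreover have grid: "real j * T / real N \<in> {0..T}" if "j \<le> N" for j
  proof -
    have "real j * T \<le> real N * T" using that T by (intro mult_right_mono) auto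
    then show ?thesis using T \<open>0 < real N\<close> by (simp add: field_simps)
  qed
  then have "set ts \<subseteq> {0..T}" by (auto simp: ts_def simp del: upt_Suc)
  ultimately have "ereal (chain_length (map g ts)) \<le> curve_length g T" by (rule curve_length_ge)
  moreover have "eps_chain \<eta> (map g ts)"
    unfolding successively_conv_nth
  proof (intro allI impI)
    fix i assume "i < length (map g ts) - 1"
    then have i: "i < N" by (simp add: len)
    then have mem: "ts ! i \<in> {0..T}" "ts ! Suc i \<in> {0..T}"
      using grid[of i] grid[of "Suc i"] by (simp_all add: nth_ts)
    have "ts ! Suc i - ts ! i = T / real N" using i by (simp add: nth_ts field_simps)
    then have "dist (ts ! Suc i) (ts ! i) < d" using \<open>T / real N < d\<close> T by (simp add: dist_real_def)
    then show "norm (map g ts ! Suc i - map g ts ! i) \<le> \<eta>"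
      using d(2)[OF mem(1,2)] i len by (simp add: dist_norm)
  qed
  moreover have "hd (map g ts) = x" "last (map g ts) = y"
    using \<open>g 0 = x\<close> \<open>g T = y\<close> \<open>0 < real N\<close> by (simp_all add: ts_def hd_map last_map del: upt_Suc)
  ultimately show ?thesis
    using that[of "map g ts"] \<open>set ts \<subseteq> {0..T}\<close> \<open>g ` {0..T} \<subseteq> M\<close> by (auto simp: ts_def simp del: upt_Suc)
qed

lemma exists_sample_near:
  fixes M X :: "'a::euclidean_space set"
  assumes "compact M" "finite X" "X \<noteq> {}" "p \<in> M"
  shows "\<exists>q\<in>X. norm (q - p) \<le> hausdorff_dist X M"
proof -
  have "bdd_above ((\<lambda>c. infdist c X) ` M)"
    using assms(1) by (intro bounded_imp_bdd_above compact_imp_bounded compact_continuous_image continuous_intros)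
  then have "infdist p X \<le> (SUP c\<in>M. infdist c X)" using assms(4) by (rule cSUP_upper2) simp
  also have "\<dots> \<le> hausdorff_dist X M" by (simp add: hausdorff_dist_def)
  finally have "infdist p X \<le> hausdorff_dist X M" .
  moreover obtain q where "q \<in> X" "infdist p X = dist p q"
    using infdist_attains_inf[OF finite_imp_closed[OF assms(2)] assms(3)] by blast
  ultimately show ?thesis by (auto simp: dist_norm norm_minus_commute)
qed

lemma graph_dist_le_hausdorff_factor:
  fixes M X :: "'a::euclidean_space set"
  assumes "compact M" "geodesically_convex M" "finite X" "X \<noteq> {}" "X \<subseteq> M" "x \<in> M" "y \<in> M" "0 < e"
    and small: "hausdorff_dist X M \<le> e / 8"
  shows "graph_dist (X \<union> {x, y}) e x y \<le> ereal (1 + 4 * (hausdorff_dist X M / e)) * geodesic_dist M x y"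
proof -
  define \<delta> where "\<delta> = hausdorff_dist X M"
  define V where "V = X \<union> {x, y}"
  have near: "\<forall>p\<in>M. \<exists>q\<in>V. norm (q - p) \<le> \<delta>"
    using exists_sample_near[OF assms(1,3,4)] by (fastforce simp: V_def \<delta>_def)
  then have "0 \<le> \<delta>" using assms(6) norm_ge_zero by (meson order_trans)
  obtain g T where g: "curve_in M x y g T" "curve_length g T = geodesic_dist M x y"
    using assms(2,6,7) unfolding geodesically_convex_def by blast
  have par: "0 < e / 4" "e / 4 < e - 2 * \<delta>" "0 \<le> \<delta>" "(e - 2 * \<delta>) + 2 * \<delta> \<le> e"
    using assms(8) small \<open>0 \<le> \<delta>\<close> by (auto simp: \<delta>_def)
  obtain ps where ps: "ps \<noteq> []" "hd ps = x" "last ps = y" "set ps \<subseteq> M" "eps_chain (e / 4) ps"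
    "ereal (chain_length ps) \<le> curve_length g T"
    by (rule curve_fine_chain[OF g(1) par(1)])
  have "x \<in> V" "y \<in> V" "\<forall>p\<in>set ps. \<exists>q\<in>V. norm (q - p) \<le> \<delta>" using near ps(4) by (auto simp: V_def)
  then obtain P where P: "graph_path V e x y P"
    "chain_length P \<le> norm (x - hd ps) + (1 + 2 * \<delta> / (e - 2 * \<delta> - e / 4)) * chain_length ps"
    using greedy_graph_path[OF par, of y V ps x] ps(1-3,5) \<open>0 \<le> \<delta>\<close> by auto
  have "2 * \<delta> / (e - 2 * \<delta> - e / 4) \<le> 2 * \<delta> / (e / 2)"
    using \<open>0 \<le> \<delta>\<close> small assms(8) by (intro divide_left_mono) (auto simp: \<delta>_def)
  then have "(1 + 2 * \<delta> / (e - 2 * \<delta> - e / 4)) * chain_length ps \<le> (1 + 4 * (\<delta> / e)) * chain_length ps"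
    using chain_sum_nonneg[of "\<lambda>s. s" ps] by (intro mult_right_mono) auto
  then have "chain_length P \<le> (1 + 4 * (\<delta> / e)) * chain_length ps" using P(2) ps(2) by simp
  then have "graph_dist V e x y \<le> ereal (1 + 4 * (\<delta> / e)) * ereal (chain_length ps)"
    using graph_dist_le_chain_length[OF P(1)] by (simp add: order_trans)
  also have "\<dots> \<le> ereal (1 + 4 * (\<delta> / e)) * geodesic_dist M x y"
    using ps(6) g(2) \<open>0 \<le> \<delta>\<close> assms(8) by (intro ereal_mult_left_mono) auto
  finally show ?thesis by (simp add: V_def \<delta>_def)
qed

lemma reach_at_least_if_le_reach:
  fixes M :: "'a::euclidean_space set"
  assumes "compact M" "M \<noteq> {}" "0 < r" "ereal r \<le> reach M"
  shows "reach_at_least M r"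
proof
  fix z p q assume z: "infdist z M < r" and pq: "p \<in> M" "q \<in> M"
    and dist_pq: "dist z p = infdist z M" "dist z q = infdist z M"
  have "ereal (dist z p) < ereal r" using z dist_pq by simp
  also have "\<dots> \<le> reach M" by (rule assms(4))
  also have "\<dots> \<le> reach_at M p" unfolding reach_def by (rule INF_lower[OF pq(1)])
  finally have "ereal (dist z p) < reach_at M p" .
  then obtain \<rho> where "ball p \<rho> \<subseteq> Unp M" "dist z p < \<rho>"
    unfolding reach_at_def by (auto simp: less_SUP_iff)
  then have "z \<in> Unp M" by (auto simp: dist_commute)
  moreover have "\<forall>b\<in>M. dist z p \<le> dist z b" "\<forall>b\<in>M. dist z q \<le> dist z b"
    using dist_pq infdist_le by metis+
  ultimately show "p = q" using pq by (auto simp: Unp_def)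
qed (use assms in auto)

lemma ereal_le_if_tendsto_one_mult_le:
  fixes a b :: ereal and c :: "nat \<Rightarrow> real"
  assumes "c \<longlonglongrightarrow> 1" "\<And>k. 0 < c k" "\<And>k. ereal (c k) * a \<le> b" "0 \<le> a"
  shows "a \<le> b"
proof (cases a)
  case (real g)
  have lim: "(\<lambda>k. ereal (c k * g)) \<longlonglongrightarrow> ereal (1 * g)" using assms(1) by (intro tendsto_intros)
  have "ereal (1 * g) \<le> b" by (rule LIMSEQ_le_const2[OF lim]) (use assms(3) real in auto)
  then show ?thesis using real by simp
next
  case PInf
  then show ?thesis using assms(2,3)[of 0] by simp
qed (use assms(4) in simp)

text \<open>For infinite reach the factor is \<open>1\<close>, obtained as the limit of the bounds for every finite
  \<open>r\<close>.\<close>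

lemma graph_dist_ge_reach_factor:
  fixes M :: "'a::euclidean_space set"
  assumes "compact M" "geodesically_convex M" "0 < reach M" "V \<subseteq> M" "x \<in> V" "y \<in> V"
    and e: "0 < e" "ereal e < 2 * reach M"
  shows "ereal (1 - (1/24) * (pi * e / 2)^2 * (real_of_ereal (inverse (reach M)))^2) * geodesic_dist M x y
    \<le> graph_dist V e x y"
proof -
  have reach: "reach_at_least M r" if "0 < r" "ereal r \<le> reach M" for r
    using assms(1,4,5) that by (intro reach_at_least_if_le_reach) auto
  show ?thesis
  proof (cases "reach M")
    case (real r)
    with assms(3) e(2) have "0 < r" "e < 2 * r" by auto
    then show ?thesis
      using reach_at_least.graph_dist_ge_arc_chord_factor[OF reach assms(2) e(1) _ assms(4-6)] real
      by (simp add: arc_chord_factor_def inverse_eq_divide)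
  next
    case PInf
    define c where "c k = arc_chord_factor e (e + 1 + real k)" for k
    have c: "0 < c k" "ereal (c k) * geodesic_dist M x y \<le> graph_dist V e x y" for k
      using reach_at_least.graph_dist_ge_arc_chord_factor[OF reach assms(2) e(1) _ assms(4-6)]
        arc_chord_factor_pos[of "e + 1 + real k" e] e(1) PInf by (auto simp: c_def)
    have "filterlim (\<lambda>k. e + 1 + real k) at_top sequentially"
      by (intro filterlim_tendsto_add_at_top[OF tendsto_const] filterlim_real_sequentially)
    then have "c \<longlonglongrightarrow> 1 - (1/24) * (pi * e / 2)^2 * 0^2"
      unfolding c_def arc_chord_factor_def
      by (intro tendsto_intros tendsto_divide_0[OF tendsto_const] filterlim_at_top_imp_at_infinity)
    then have "c \<longlonglongrightarrow> 1" by simp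
    from ereal_le_if_tendsto_one_mult_le[OF this c geodesic_dist_nonneg] show ?thesis
      using PInf by simp
  qed (use assms(3) in simp)
qed

theorem theorem1:
  fixes M :: "'a::euclidean_space set"
    and X :: "nat \<Rightarrow> 'a set"
    and eps :: "nat \<Rightarrow> real"
  assumes "compact M"
    and "geodesically_convex M"
    and "reach M > 0"
    and "\<And>n. n \<ge> 1 \<Longrightarrow> finite (X n) \<and> X n \<noteq> {} \<and> X n \<subseteq> M"
    and "\<And>n. eps n > 0"
    and "eps \<longlonglongrightarrow> 0"
    and "(\<lambda>n. hausdorff_dist (X n) M / eps n) \<longlonglongrightarrow> 0"
  shows "\<forall>\<^sub>F n in sequentially. ereal (eps n) < 2 * reach M \<and>
           (\<forall>x\<in>M. \<forall>y\<in>M.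
              ereal (1 - (1/24) * (pi * eps n / 2)^2 * (real_of_ereal (inverse (reach M)))^2)
                 * geodesic_dist M x y
                \<le> graph_dist (X n \<union> {x, y}) (eps n) x y
            \<and> graph_dist (X n \<union> {x, y}) (eps n) x y
                \<le> ereal (1 + 4 * (hausdorff_dist (X n) M / eps n)) * geodesic_dist M x y)"
proof -
  have "(\<lambda>n. ereal (eps n)) \<longlonglongrightarrow> 0" using assms(6) by (simp add: zero_ereal_def)
  moreover have "0 < 2 * reach M" using assms(3) by (cases "reach M") auto
  ultimately have "\<forall>\<^sub>F n in sequentially. ereal (eps n) < 2 * reach M" by (rule order_tendstoD(2))
  moreover have "\<forall>\<^sub>F n in sequentially. hausdorff_dist (X n) M \<le> eps n / 8"
    using order_tendstoD(2)[OF assms(7), of "1/8"] assms(5)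
    by (auto elim!: eventually_mono simp: field_simps)
  ultimately show ?thesis
    using eventually_ge_at_top[of 1]
  proof eventually_elim
    case (elim n)
    with assms(4) have "finite (X n)" "X n \<noteq> {}" "X n \<subseteq> M" by auto
    then show ?case
      using elim assms(1-3,5) graph_dist_ge_reach_factor[of M "X n \<union> {x, y}" x y "eps n" for x y]
        graph_dist_le_hausdorff_factor[of M "X n" _ _ "eps n"] by auto
  qed
qed

end
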